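(* Let $\mu\ge0$ be an integer and let $\gamma\ge0$ and $m\ge\gamma$ be integers. Then $$\mathsf{C}^{(\mu,\mu)}_{\gamma\gamma mm}=\frac12\sum_{\lambda=0}^\gamma\mathsf{M}^{(\mu)}_\gamma(\lambda)\,\mathsf{M}^{(\mu)}_m(\lambda)\,\xi_\lambda(\mu),$$ where $$\xi_\lambda(\mu)=\frac{\pi2^{1-4\mu}\Gamma(2\lambda+4\mu+1)}{(4\lambda+4\mu+1)\Gamma(2\lambda+1)\Gamma(2\mu+\frac12)^2},$$ $$\mathsf{M}^{(\mu)}_m(\lambda)=\frac{1}{2\pi^{3/2}}\frac{(4\lambda+4\mu+1)\Gamma(\lambda+\frac12)\Gamma(2\mu+\frac12)\Gamma(\lambda+\mu+\frac12)}{\Gamma(\lambda+\mu+1)\Gamma(\lambda+2\mu+1)}\cdot\frac{(2\mu+2m+1)\Gamma(m-\lambda+\frac12)\Gamma(m+\lambda+2\mu+1)}{\Gamma(m-\lambda+1)\Gamma(m+\lambda+2\mu+\frac32)}.$$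
   Context: $\omega_n=2n+1+2\mu$. $\mathsf{e}_n(x)=\mathsf{N}_n(1-\cos2x)^{\mu/2}(1+\cos2x)^{\mu/2}P_n^{(\mu,\mu)}(\cos2x)$ with $P_n^{(\mu,\mu)}$ the Jacobi polynomial and $\mathsf{N}_n=\sqrt{\frac{\omega_n}{2^{2\mu}}\frac{\Gamma(n+1)\Gamma(n+2\mu+1)}{\Gamma(n+\mu+1)^2}}$; $\mathsf{C}^{(\mu,\mu)}_{ijkm}=\int_0^{\pi/2}\mathsf{e}_i\mathsf{e}_j\mathsf{e}_k\mathsf{e}_m\sin(2x)\,dx$. *)

theory Defs
  imports "HOL-Analysis.Analysis"
begin

definition jacobiP :: "nat \<Rightarrow> nat \<Rightarrow> nat \<Rightarrow> real \<Rightarrow> real" where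
  "jacobiP n a b x = (\<Sum>s=0..n. real ((n + a) choose (n - s)) * real ((n + b) choose s)
       * ((x - 1) / 2) ^ s * ((x + 1) / 2) ^ (n - s))"

definition omega :: "nat \<Rightarrow> nat \<Rightarrow> real" where
  "omega \<mu> n = 2 * real n + 1 + 2 * real \<mu>"

definition normN :: "nat \<Rightarrow> nat \<Rightarrow> real" where
  "normN \<mu> n = sqrt (omega \<mu> n / 2 ^ (2 * \<mu>) *
      (Gamma (real n + 1) * Gamma (real n + 2 * real \<mu> + 1)) / (Gamma (real n + real \<mu> + 1))\<^sup>2)"

text \<open>(1 - cos 2x)^(mu/2) (1 + cos 2x)^(mu/2), written with sqrt to avoid the 0 powr 0 = 0 convention.\<close>
definition eigf :: "nat \<Rightarrow> nat \<Rightarrow> real \<Rightarrow> real" where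
  "eigf \<mu> n x = normN \<mu> n * sqrt ((1 - cos (2 * x)) ^ \<mu>) * sqrt ((1 + cos (2 * x)) ^ \<mu>)
      * jacobiP n \<mu> \<mu> (cos (2 * x))"

definition Ccoef :: "nat \<Rightarrow> nat \<Rightarrow> nat \<Rightarrow> nat \<Rightarrow> nat \<Rightarrow> real" where
  "Ccoef \<mu> i j k m = integral {0..pi/2}
      (\<lambda>x. eigf \<mu> i x * eigf \<mu> j x * eigf \<mu> k x * eigf \<mu> m x * sin (2 * x))"

definition xi :: "nat \<Rightarrow> nat \<Rightarrow> real" where
  "xi \<mu> l = pi * 2 powr (1 - 4 * real \<mu>) * Gamma (2 * real l + 4 * real \<mu> + 1)
      / ((4 * real l + 4 * real \<mu> + 1) * Gamma (2 * real l + 1) * (Gamma (2 * real \<mu> + 1/2))\<^sup>2)"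

definition Mcoef :: "nat \<Rightarrow> nat \<Rightarrow> nat \<Rightarrow> real" where
  "Mcoef \<mu> m l = 1 / (2 * pi powr (3/2)) *
     ((4 * real l + 4 * real \<mu> + 1) * Gamma (real l + 1/2) * Gamma (2 * real \<mu> + 1/2)
        * Gamma (real l + real \<mu> + 1/2))
     / (Gamma (real l + real \<mu> + 1) * Gamma (real l + 2 * real \<mu> + 1))
   * ((2 * real \<mu> + 2 * real m + 1) * Gamma (real m - real l + 1/2)
        * Gamma (real m + real l + 2 * real \<mu> + 1))
     / (Gamma (real m - real l + 1) * Gamma (real m + real l + 2 * real \<mu> + 3/2))"

end

(*
  With t = cos 2x the integrand of Ccoef becomes a polynomial in t: the square of an
  eigenfunction is N_n^2 (1 - t^2)^mu P_n(t)^2.  The differential equation of the Jacobi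
  polynomial P_n makes P_n^2 a zero of the symmetric square of that equation, a third order
  operator which on even polynomials vanishing at 1 has trivial kernel; this yields the
  expansion P_n^2 = sum_k alpha_(n,k) (1 - t^2)^k.  Hence Ccoef is N_gamma^2 N_m^2 / 2 times
  the bilinear form sum_(a,b) alpha_(gamma,a) alpha_(m,b) w_(2 mu + a + b) of the moments
  w_p of (1 - t^2)^p on [-1, 1].  Expanding in the polynomials in 1 - t^2 that are
  orthogonal for the weight (1 - t^2)^(2 mu) diagonalizes this form; by the Pfaff-Saalschuetz
  identity the pairings of alpha_n with these polynomials and their norms have closed forms,
  which are the factors M_n(lambda) and xi_lambda of the statement.
*)

theory Submission
  imports Defs "HOL-Computational_Algebra.Polynomial"
begin

section \<open>Pochhammer symbols and the Pfaff-Saalschuetz identity\<close>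

lemma half_integer_not_Ints:
  fixes x :: real
  assumes "x - 1/2 \<in> \<int>"
  shows "x \<notin> \<int>"
proof
  assume "x \<in> \<int>"
  then have "x - (x - 1/2) \<in> \<int>" using assms by (rule Ints_diff)
  then have "(1/2::real) \<in> \<int>" by simp
  then obtain n :: int where "1/2 = real_of_int n" by (auto elim: Ints_cases)
  then have "real_of_int (2 * n) = real_of_int 1" by simp
  then have "2 * n = 1" by (simp only: of_int_eq_iff)
  then show False by presburger
qed

lemma pochhammer_neq_0_if_not_nonpos_Ints:
  fixes x :: real
  assumes "x \<notin> \<int>\<^sub>\<le>\<^sub>0"
  shows "pochhammer x k \<noteq> 0"
  using assms pochhammer_eq_0_imp_nonpos_Int by blast

lemma pochhammer_plus_1_mult:
  "pochhammer (x + 1) j * x = pochhammer x j * (x + of_nat j)"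
  for x :: "'a :: comm_semiring_1"
  using pochhammer_Suc[of x j] pochhammer_rec[of x j] by (simp add: ac_simps)

definition saalschuetz_term :: "real \<Rightarrow> real \<Rightarrow> real \<Rightarrow> nat \<Rightarrow> nat \<Rightarrow> real" where
  "saalschuetz_term a b c N j = pochhammer (- real N) j * pochhammer a j * pochhammer b j /
     (pochhammer c j * pochhammer (1 + a + b - c - real N) j * fact j)"

lemma saalschuetz_term_eq_0: "N < j \<Longrightarrow> saalschuetz_term a b c N j = 0"
  by (simp add: saalschuetz_term_def pochhammer_of_nat_eq_0_iff)

text \<open>Zeilberger's certificate: the difference of the summands for \<open>N + 1\<close> and \<open>N\<close>,
  weighted so that the full sums satisfy the recurrence of the right-hand side, telescopes.\<close>
lemma saalschuetz_term_telescoping: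
  fixes a b c :: real and N j :: nat
  assumes c: "c \<notin> \<int>\<^sub>\<le>\<^sub>0" and abc: "a + b - c \<notin> \<int>"
  defines "e \<equiv> a + b - c - real N"
  defines "g \<equiv> (\<lambda>j::nat. e / (real N + 1) * real j * (real j + c - 1) * saalschuetz_term a b c (Suc N) j)"
  shows "(c + N) * (c - a - b + N) * saalschuetz_term a b c (Suc N) j
           - (c - a + N) * (c - b + N) * saalschuetz_term a b c N j
         = g (Suc j) - g j"
proof -
  define X where "X = saalschuetz_term a b c (Suc N) j"
  have e_not_Ints: "e + real k \<notin> \<int>" for k :: nat
  proof
    assume "e + real k \<in> \<int>"
    moreover have "a + b - c = (e + real k) + (real N - real k)" by (simp add: e_def)
    ultimately have "a + b - c \<in> \<int>" by (metis Ints_add Ints_diff Ints_of_nat)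
    with abc show False ..
  qed
  have ek: "e + real k \<noteq> 0" for k
    using e_not_Ints[of k] by (metis Ints_0)
  have e0: "e \<noteq> 0" using ek[of 0] by simp
  have pe: "pochhammer e k \<noteq> 0" for k
    using e_not_Ints[of 0] by (intro pochhammer_neq_0_if_not_nonpos_Ints) (auto dest: nonpos_Ints_Int)
  have pe1: "pochhammer (e + 1) k \<noteq> 0" for k
    using e_not_Ints[of 1] by (intro pochhammer_neq_0_if_not_nonpos_Ints) (auto dest: nonpos_Ints_Int)
  have pc: "pochhammer c k \<noteq> 0" for k
    using c by (rule pochhammer_neq_0_if_not_nonpos_Ints)
  have cj: "c + real j \<noteq> 0"
    using c by (metis add.commute add_eq_0_iff2 minus_of_nat_in_nonpos_Ints)
  have next_term: "saalschuetz_term a b c (Suc N) (Suc j)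
      = X * ((real j - real N - 1) * (a + j) * (b + j)) / ((c + j) * (e + j) * (real j + 1))"
    unfolding X_def saalschuetz_term_def e_def
    using cj ek[of j] pe pc by (simp add: pochhammer_Suc field_simps e_def)
  have prev_term: "saalschuetz_term a b c N j = X * (real N + 1 - real j) * e / ((real N + 1) * (e + j))"
  proof -
    have p1: "pochhammer (- real N) j
        = pochhammer (- real (Suc N)) j * ((real N + 1 - real j) / (real N + 1))"
      using pochhammer_plus_1_mult[of "- real (Suc N)" j] by (simp add: field_simps)
    have "pochhammer (e + 1) j * e = pochhammer e j * (e + j)"
      by (rule pochhammer_plus_1_mult)
    then have p2: "pochhammer (e + 1) j = pochhammer e j * (e + j) / e"
      using e0 by (simp add: field_simps)
    have e1: "1 + a + b - c - real N = e + 1" and e2: "1 + a + b - c - real (Suc N) = e"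
      unfolding e_def by simp_all
    show ?thesis
      unfolding X_def saalschuetz_term_def e1 e2 p1 p2
      using pe pc ek[of j] e0 by (simp add: field_simps)
  qed
  have key: "(c+N)*(c-a-b+N)*(real N+1)*(e+real j) - (c-a+N)*(c-b+N)*(real N+1-real j)*e
      = e*(real j-real N-1)*(a+j)*(b+j) - e*j*(j+c-1)*(e+j)"
    unfolding e_def by (simp add: algebra_simps)
  have N1: "real N + 1 \<noteq> 0" by simp
  have "(c + N) * (c - a - b + N) * X - (c - a + N) * (c - b + N) * saalschuetz_term a b c N j
     = X * ((c+N)*(c-a-b+N)*(real N+1)*(e+real j) - (c-a+N)*(c-b+N)*(real N+1-real j)*e)
         / ((real N+1)*(e+real j))"
    unfolding prev_term using ek[of j] N1 by (simp add: divide_simps) (simp add: algebra_simps)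
  also have "\<dots> = X * (e*(real j-real N-1)*(a+j)*(b+j) - e*j*(j+c-1)*(e+j)) / ((real N+1)*(e+real j))"
    unfolding key ..
  also have "\<dots> = g (Suc j) - g j"
    unfolding g_def next_term X_def[symmetric]
    using ek[of j] N1 cj by (simp add: divide_simps) (simp add: algebra_simps)
  finally show ?thesis unfolding X_def .
qed

theorem pfaff_saalschuetz:
  fixes a b c :: real and N :: nat
  assumes c: "c \<notin> \<int>\<^sub>\<le>\<^sub>0" and abc: "a + b - c \<notin> \<int>"
  shows "(\<Sum>j\<le>N. saalschuetz_term a b c N j)
       = pochhammer (c - a) N * pochhammer (c - b) N / (pochhammer c N * pochhammer (c - a - b) N)"
proof -
  define S where "S N = (\<Sum>j\<le>N. saalschuetz_term a b c N j)" for N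
  have rec: "(c + N) * (c - a - b + N) * S (Suc N) = (c - a + N) * (c - b + N) * S N" for N
  proof -
    define e where "e = a + b - c - real N"
    define g where "g = (\<lambda>j::nat. e / (real N + 1) * real j * (real j + c - 1) * saalschuetz_term a b c (Suc N) j)"
    have S_Suc: "S (Suc N) = (\<Sum>j<Suc (Suc N). saalschuetz_term a b c (Suc N) j)"
      by (simp add: S_def lessThan_Suc_atMost)
    have S_N: "S N = (\<Sum>j<Suc (Suc N). saalschuetz_term a b c N j)"
      by (simp add: S_def lessThan_Suc_atMost saalschuetz_term_eq_0)
    have "(c + N) * (c - a - b + N) * S (Suc N) - (c - a + N) * (c - b + N) * S N
        = (\<Sum>j<Suc (Suc N). (c + N) * (c - a - b + N) * saalschuetz_term a b c (Suc N) j
                             - (c - a + N) * (c - b + N) * saalschuetz_term a b c N j)"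
      unfolding S_Suc S_N by (simp only: sum_subtractf sum_distrib_left)
    also have "\<dots> = (\<Sum>j<Suc (Suc N). g (Suc j) - g j)"
      unfolding g_def e_def by (intro sum.cong refl saalschuetz_term_telescoping c abc)
    also have "\<dots> = g (Suc (Suc N)) - g 0"
      by (rule sum_lessThan_telescope)
    also have "\<dots> = 0"
      by (simp add: g_def saalschuetz_term_eq_0)
    finally show ?thesis by simp
  qed
  have prod: "pochhammer c N * pochhammer (c - a - b) N * S N = pochhammer (c - a) N * pochhammer (c - b) N"
    for N
  proof (induction N)
    case 0
    then show ?case by (simp add: S_def saalschuetz_term_def)
  next
    case (Suc N)
    have "pochhammer c (Suc N) * pochhammer (c - a - b) (Suc N) * S (Suc N)
        = pochhammer c N * pochhammer (c - a - b) N * ((c + N) * (c - a - b + N) * S (Suc N))"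
      by (simp add: pochhammer_Suc algebra_simps)
    also have "\<dots> = (pochhammer c N * pochhammer (c - a - b) N * S N) * ((c - a + N) * (c - b + N))"
      unfolding rec by (simp only: mult_ac)
    also have "\<dots> = pochhammer (c - a) (Suc N) * pochhammer (c - b) (Suc N)"
      unfolding Suc.IH by (simp add: pochhammer_Suc algebra_simps)
    finally show ?case .
  qed
  have "pochhammer c N \<noteq> 0" using c by (rule pochhammer_neq_0_if_not_nonpos_Ints)
  moreover have "pochhammer (c - a - b) N \<noteq> 0"
  proof (rule pochhammer_neq_0_if_not_nonpos_Ints)
    have "c - a - b = - (a + b - c)" by simp
    then have "c - a - b \<notin> \<int>"
      using abc by (metis Ints_minus minus_minus)
    then show "c - a - b \<notin> \<int>\<^sub>\<le>\<^sub>0" by (auto dest: nonpos_Ints_Int)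
  qed
  ultimately show ?thesis
    using prod[of N] by (simp add: S_def field_simps)
qed

definition half_pochhammer :: "nat \<Rightarrow> real" where
  "half_pochhammer k = pochhammer (1/2) k"

lemma half_pochhammer_pos: "half_pochhammer k > 0"
  unfolding half_pochhammer_def by (rule pochhammer_pos) simp

lemma half_pochhammer_eq_fact: "half_pochhammer k = fact (2 * k) / (4 ^ k * fact k)"
proof -
  have "(4::real) ^ k = 2 ^ (2 * k)" by (simp add: power_mult)
  then show ?thesis
    using fact_double[of k, where 'a = real] by (simp add: half_pochhammer_def field_simps)
qed

lemma pochhammer_of_nat_plus_1: "pochhammer (real k + 1) j = fact (k + j) / fact k"
proof -
  have "(fact (k + j) :: real) = pochhammer 1 (k + j)" by (rule pochhammer_fact)
  also have "\<dots> = fact k * pochhammer (1 + real k) j"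
    by (simp add: pochhammer_product' pochhammer_fact)
  finally show ?thesis by (simp add: field_simps add.commute)
qed

lemma pochhammer_of_nat_plus_half:
  "pochhammer (real k + 1/2) j = half_pochhammer (k + j) / half_pochhammer k"
  using pochhammer_product'[of "1/2::real" k j] half_pochhammer_pos[of k]
  by (simp add: half_pochhammer_def add.commute field_simps)

lemma pochhammer_three_halves: "pochhammer (3/2) k = 2 * half_pochhammer (Suc k)"
  unfolding half_pochhammer_def pochhammer_rec by simp

lemma pochhammer_minus_of_nat:
  assumes "l \<le> n"
  shows "pochhammer (- real n) l = (-1) ^ l * fact n / fact (n - l)"
proof -
  have "real n - real l + 1 = real (n - l) + 1" using assms by (simp add: of_nat_diff)
  then show ?thesis
    using pochhammer_minus[of "real n" l] pochhammer_of_nat_plus_1[of "n - l" l] assms by simp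
qed

lemma pochhammer_half_minus_of_nat: "pochhammer (1/2 - real l) l = (-1) ^ l * half_pochhammer l"
  using pochhammer_minus[of "real l - 1/2" l] by (simp add: half_pochhammer_def)

lemma Gamma_eq_fact: "x = real k + 1 \<Longrightarrow> Gamma x = fact k"
  using Gamma_fact[of k] by (simp add: add.commute)

lemma Gamma_eq_half_pochhammer: "x = real k + 1/2 \<Longrightarrow> Gamma x = sqrt pi * half_pochhammer k"
proof -
  assume x: "x = real k + 1/2"
  have "(1/2::real) \<notin> \<int>\<^sub>\<le>\<^sub>0"
    using half_integer_not_Ints[of "1/2"] by (auto dest: nonpos_Ints_Int)
  then have "pochhammer (1/2::real) k = Gamma (1/2 + real k) / Gamma (1/2)"
    by (rule pochhammer_Gamma)
  moreover have "Gamma (1/2::real) > 0" by (rule Gamma_real_pos) simp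
  ultimately show ?thesis
    unfolding x using Gamma_one_half_real by (simp add: half_pochhammer_def field_simps add.commute)
qed

section \<open>Polynomials in (x - 1)/2, (x + 1)/2 and 1 - x^2\<close>

definition x_poly :: "real poly" where "x_poly = [:0, 1:]"
definition w_poly :: "real poly" where "w_poly = [:1, 0, -1:]"
definition xm_half :: "real poly" where "xm_half = [:-1/2, 1/2:]"
definition xp_half :: "real poly" where "xp_half = [:1/2, 1/2:]"

lemma poly_x_poly [simp]: "poly x_poly t = t"
  by (simp add: x_poly_def)

lemma poly_w_poly [simp]: "poly w_poly t = 1 - t\<^sup>2"
  by (simp add: w_poly_def power2_eq_square)

lemma poly_xm_half [simp]: "poly xm_half t = (t - 1) / 2"
  by (simp add: xm_half_def field_simps)

lemma poly_xp_half [simp]: "poly xp_half t = (t + 1) / 2"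
  by (simp add: xp_half_def field_simps)

lemma pderiv_x_poly [simp]: "pderiv x_poly = 1"
  by (simp add: x_poly_def pderiv_pCons one_pCons)

lemma pderiv_w_poly [simp]: "pderiv w_poly = smult (-2) x_poly"
  by (simp add: w_poly_def x_poly_def pderiv_pCons)

lemma pderiv_xm_half [simp]: "pderiv xm_half = [:1/2:]"
  by (simp add: xm_half_def pderiv_pCons)

lemma pderiv_xp_half [simp]: "pderiv xp_half = [:1/2:]"
  by (simp add: xp_half_def pderiv_pCons)

lemma w_poly_eq: "w_poly = smult (-4) (xp_half * xm_half)"
  by (simp add: w_poly_def xp_half_def xm_half_def)

lemma x_poly_eq: "x_poly = xp_half + xm_half"
  by (simp add: x_poly_def xp_half_def xm_half_def)

lemma poly_eq_by_eval: "(\<And>t. poly p t = poly q t) \<Longrightarrow> p = (q :: real poly)"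
  by (rule poly_eq_poly_eq_iff[THEN iffD1, OF ext])

lemma pderiv_sum: "pderiv (sum f A) = (\<Sum>x\<in>A. pderiv (f x))"
  using higher_pderiv_sum[of 1 f A] by simp

lemma smult_sum_right: "smult c (sum f A) = (\<Sum>x\<in>A. smult c (f x))"
  by (induction A rule: infinite_finite_induct) (simp_all add: smult_add_right)

definition binary_form :: "nat \<Rightarrow> (nat \<Rightarrow> real) \<Rightarrow> real poly" where
  "binary_form k f = (\<Sum>i\<le>k. smult (f i) (xm_half ^ i * xp_half ^ (k - i)))"

lemma poly_binary_form:
  "poly (binary_form k f) t = (\<Sum>i\<le>k. f i * ((t - 1) / 2) ^ i * ((t + 1) / 2) ^ (k - i))"
  by (simp add: binary_form_def poly_sum mult.assoc)

lemma binary_form_eq_0: "(\<And>i. i \<le> k \<Longrightarrow> f i = 0) \<Longrightarrow> binary_form k f = 0"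
  by (simp add: binary_form_def)

lemma binary_form_add: "binary_form k f + binary_form k g = binary_form k (\<lambda>i. f i + g i)"
  by (simp add: binary_form_def sum.distrib smult_add_left)

lemma binary_form_diff: "binary_form k f - binary_form k g = binary_form k (\<lambda>i. f i - g i)"
  by (simp add: binary_form_def sum_subtractf smult_diff_left)

lemma smult_binary_form: "smult c (binary_form k f) = binary_form k (\<lambda>i. c * f i)"
  by (simp add: binary_form_def smult_sum_right)

definition shift_coeff :: "(nat \<Rightarrow> real) \<Rightarrow> nat \<Rightarrow> real" where
  "shift_coeff f i = (case i of 0 \<Rightarrow> 0 | Suc j \<Rightarrow> f j)"

lemma xm_half_mult_binary_form: "xm_half * binary_form k f = binary_form (Suc k) (shift_coeff f)"
proof -
  have "xm_half * binary_form k f = (\<Sum>i\<le>k. smult (f i) (xm_half ^ Suc i * xp_half ^ (Suc k - Suc i)))"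
    unfolding binary_form_def sum_distrib_left by (rule sum.cong) (auto simp: mult_ac)
  also have "\<dots> = binary_form (Suc k) (shift_coeff f)"
    unfolding binary_form_def by (subst sum.atMost_Suc_shift) (simp add: shift_coeff_def)
  finally show ?thesis .
qed

lemma xp_half_mult_binary_form:
  "f (Suc k) = 0 \<Longrightarrow> xp_half * binary_form k f = binary_form (Suc k) f"
  unfolding binary_form_def sum_distrib_left
  by (simp add: Suc_diff_le mult_ac)

definition form_deriv_coeff :: "nat \<Rightarrow> (nat \<Rightarrow> real) \<Rightarrow> nat \<Rightarrow> real" where
  "form_deriv_coeff k f i = (real (Suc i) * f (Suc i) + real (k - i) * f i) / 2"

lemma pderiv_xm_xp_power:
  "pderiv (xm_half ^ i * xp_half ^ r) =
     smult (real i / 2) (xm_half ^ (i - 1) * xp_half ^ r) + smult (real r / 2) (xm_half ^ i * xp_half ^ (r - 1))"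
  by (cases i; cases r) (simp_all add: pderiv_mult pderiv_power_Suc algebra_simps del: power_Suc)

lemma pderiv_binary_form:
  "pderiv (binary_form (Suc k) f) = binary_form k (form_deriv_coeff (Suc k) f)"
proof -
  have "pderiv (binary_form (Suc k) f)
      = (\<Sum>i\<le>Suc k. smult (f i * real i / 2) (xm_half ^ (i - 1) * xp_half ^ (Suc k - i)))
      + (\<Sum>i\<le>Suc k. smult (f i * real (Suc k - i) / 2) (xm_half ^ i * xp_half ^ (Suc k - i - 1)))"
    unfolding binary_form_def pderiv_sum pderiv_smult pderiv_xm_xp_power
    by (simp add: sum.distrib smult_add_right)
  also have "(\<Sum>i\<le>Suc k. smult (f i * real i / 2) (xm_half ^ (i - 1) * xp_half ^ (Suc k - i)))
      = (\<Sum>i\<le>k. smult (f (Suc i) * real (Suc i) / 2) (xm_half ^ i * xp_half ^ (k - i)))"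
    by (subst sum.atMost_Suc_shift) simp
  also have "(\<Sum>i\<le>Suc k. smult (f i * real (Suc k - i) / 2) (xm_half ^ i * xp_half ^ (Suc k - i - 1)))
      = (\<Sum>i\<le>k. smult (f i * real (Suc k - i) / 2) (xm_half ^ i * xp_half ^ (k - i)))"
    by (simp del: of_nat_Suc)
  finally show ?thesis
    unfolding binary_form_def form_deriv_coeff_def sum.distrib[symmetric] smult_add_left[symmetric]
    by (simp add: add_divide_distrib mult.commute)
qed

section \<open>The differential equation of the Jacobi polynomials\<close>

definition jacobi_coeff :: "nat \<Rightarrow> nat \<Rightarrow> nat \<Rightarrow> real" where
  "jacobi_coeff \<mu> n i = (if i \<le> n then real ((n + \<mu>) choose (n - i)) * real ((n + \<mu>) choose i) else 0)"

definition jacobi_poly :: "nat \<Rightarrow> nat \<Rightarrow> real poly" where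
  "jacobi_poly \<mu> n = binary_form n (jacobi_coeff \<mu> n)"

lemma poly_jacobi_poly: "poly (jacobi_poly \<mu> n) t = jacobiP n \<mu> \<mu> t"
  unfolding jacobi_poly_def poly_binary_form jacobiP_def
  by (rule sum.cong) (auto simp: jacobi_coeff_def)

lemma Suc_times_binomial_Suc: "Suc k * (n choose Suc k) = (n - k) * (n choose k)"
  using binomial_absorption[of k n] binomial_absorb_comp[of n k] by simp

lemma jacobi_coeff_Suc:
  "jacobi_coeff \<mu> n (Suc i) * (real i + 1) * (real i + 1 + \<mu>)
     = jacobi_coeff \<mu> n i * (real n - real i) * (real n - real i + \<mu>)"
proof (cases "i < n")
  case True
  define M where "M = n + \<mu>"
  have r1: "real (Suc i) * real (M choose Suc i) = real (M - i) * real (M choose i)"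
    using Suc_times_binomial_Suc[of i M] by (metis of_nat_mult)
  have r2: "real (Suc (n - Suc i)) * real (M choose Suc (n - Suc i))
      = real (M - (n - Suc i)) * real (M choose (n - Suc i))"
    using Suc_times_binomial_Suc[of "n - Suc i" M] by (metis of_nat_mult)
  have e1: "Suc (n - Suc i) = n - i" and e2: "real (M - (n - Suc i)) = real i + 1 + \<mu>"
    and e3: "real (M - i) = real n - real i + \<mu>" and e4: "real (n - i) = real n - real i"
    using True by (simp_all add: M_def of_nat_diff)
  have r2': "real (M choose (n - Suc i)) * (real i + 1 + \<mu>) = (real n - real i) * real (M choose (n - i))"
    using r2 unfolding e1 e2 e4 by (simp add: mult.commute)
  have "jacobi_coeff \<mu> n (Suc i) * (real i + 1) * (real i + 1 + \<mu>)
      = (real (M choose (n - Suc i)) * (real i + 1 + \<mu>)) * (real (Suc i) * real (M choose Suc i))"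
    using True by (simp add: jacobi_coeff_def M_def algebra_simps)
  also have "\<dots> = ((real n - real i) * real (M choose (n - i))) * (real (M - i) * real (M choose i))"
    unfolding r2' r1 ..
  also have "\<dots> = jacobi_coeff \<mu> n i * (real n - real i) * (real n - real i + \<mu>)"
    using True unfolding e3 by (simp add: jacobi_coeff_def M_def algebra_simps)
  finally show ?thesis .
next
  case False
  then show ?thesis by (auto simp: jacobi_coeff_def)
qed

lemma w_poly_mult_binary_form:
  assumes "f (Suc k) = 0"
  shows "w_poly * binary_form k f = binary_form (Suc (Suc k)) (\<lambda>i. -4 * shift_coeff f i)"
proof -
  have "w_poly * binary_form k f = smult (-4) (xp_half * (xm_half * binary_form k f))"
    by (simp add: w_poly_eq mult.assoc)
  also have "\<dots> = smult (-4) (binary_form (Suc (Suc k)) (shift_coeff f))"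
    using assms by (simp add: xm_half_mult_binary_form xp_half_mult_binary_form shift_coeff_def)
  finally show ?thesis by (simp only: smult_binary_form)
qed

lemma x_poly_mult_binary_form:
  "f (Suc k) = 0 \<Longrightarrow> x_poly * binary_form k f = binary_form (Suc k) (\<lambda>i. f i + shift_coeff f i)"
  by (simp add: x_poly_eq distrib_right xm_half_mult_binary_form xp_half_mult_binary_form
      binary_form_add)

lemma jacobi_coeff_ode:
  fixes \<mu> k i :: nat
  defines "n \<equiv> Suc (Suc k)"
  defines "c \<equiv> jacobi_coeff \<mu> n"
  defines "d \<equiv> form_deriv_coeff n c"
  defines "e \<equiv> form_deriv_coeff (Suc k) d"
  assumes "i \<le> n"
  shows "-4 * shift_coeff e i - (2 * real \<mu> + 2) * (d i + shift_coeff d i)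
           + real n * (real n + 2 * real \<mu> + 1) * c i = 0"
proof (cases i)
  case 0
  have "c 1 * (0 + 1) * (0 + 1 + \<mu>) = c 0 * (real n - 0) * (real n - 0 + \<mu>)"
    using jacobi_coeff_Suc[of \<mu> n 0] by (simp add: c_def)
  then show ?thesis
    unfolding 0 shift_coeff_def d_def e_def form_deriv_coeff_def n_def by (simp add: algebra_simps)
next
  case (Suc j)
  have j: "j \<le> Suc k" using assms(5) Suc by (simp add: n_def)
  have R0: "c (Suc j) * (real j + 1) * (real j + 1 + \<mu>) = c j * (real n - real j) * (real n - real j + \<mu>)"
    using jacobi_coeff_Suc[of \<mu> n j] by (simp add: c_def)
  have R1: "c (Suc (Suc j)) * (real j + 2) * (real j + 2 + \<mu>)
      = c (Suc j) * (real n - real j - 1) * (real n - real j - 1 + \<mu>)"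
    using jacobi_coeff_Suc[of \<mu> n "Suc j"] by (simp add: c_def algebra_simps)
  have "real (Suc (Suc k) - j) = real k + 2 - real j" "real (Suc k - j) = real k + 1 - real j"
    "real (Suc (Suc k) - Suc j) = real k + 1 - real j"
    using j by (simp_all add: of_nat_diff)
  then have "-4 * shift_coeff e (Suc j) - (2 * real \<mu> + 2) * (d (Suc j) + shift_coeff d (Suc j))
        + real n * (real n + 2 * real \<mu> + 1) * c (Suc j)
      = (c (Suc j) * (real j + 1) * (real j + 1 + \<mu>) - c j * (real n - real j) * (real n - real j + \<mu>))
        - (c (Suc (Suc j)) * (real j + 2) * (real j + 2 + \<mu>)
           - c (Suc j) * (real n - real j - 1) * (real n - real j - 1 + \<mu>))"
    unfolding shift_coeff_def e_def d_def form_deriv_coeff_def n_def by (simp add: field_simps)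
  then show ?thesis unfolding Suc using R0 R1 by simp
qed

theorem jacobi_poly_ode:
  "w_poly * pderiv (pderiv (jacobi_poly \<mu> n))
     = smult (2 * real \<mu> + 2) (x_poly * pderiv (jacobi_poly \<mu> n))
       - smult (real n * (real n + 2 * real \<mu> + 1)) (jacobi_poly \<mu> n)"
proof (cases "n \<ge> 2")
  case False
  then consider "n = 0" | "n = 1" by linarith
  then show ?thesis
  proof cases
    case 1
    then show ?thesis by (simp add: jacobi_poly_def binary_form_def)
  next
    case 2
    have "jacobi_poly \<mu> 1 = smult (1 + real \<mu>) x_poly"
      by (simp add: jacobi_poly_def binary_form_def jacobi_coeff_def x_poly_eq smult_add_right)
    with 2 show ?thesis
      by (simp add: x_poly_def pderiv_pCons pderiv_smult algebra_simps)
  qed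
next
  case True
  then obtain k where n: "n = Suc (Suc k)" by (metis add_2_eq_Suc le_Suc_ex)
  define c where "c = jacobi_coeff \<mu> n"
  define d where "d = form_deriv_coeff n c"
  define e where "e = form_deriv_coeff (Suc k) d"
  have Y: "jacobi_poly \<mu> n = binary_form (Suc (Suc k)) c"
    by (simp add: jacobi_poly_def c_def n)
  have Y1: "pderiv (jacobi_poly \<mu> n) = binary_form (Suc k) d"
    unfolding Y pderiv_binary_form by (simp add: d_def n)
  have Y2: "pderiv (pderiv (jacobi_poly \<mu> n)) = binary_form k e"
    unfolding Y1 pderiv_binary_form e_def ..
  have d_top: "d (Suc (Suc k)) = 0"
    by (simp add: d_def c_def form_deriv_coeff_def jacobi_coeff_def n)
  have e_top: "e (Suc k) = 0"
    by (simp add: e_def form_deriv_coeff_def d_top)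
  have "w_poly * pderiv (pderiv (jacobi_poly \<mu> n))
        - (smult (2 * real \<mu> + 2) (x_poly * pderiv (jacobi_poly \<mu> n))
           - smult (real n * (real n + 2 * real \<mu> + 1)) (jacobi_poly \<mu> n))
      = binary_form (Suc (Suc k)) (\<lambda>i. -4 * shift_coeff e i - (2 * real \<mu> + 2) * (d i + shift_coeff d i)
           + real n * (real n + 2 * real \<mu> + 1) * c i)"
    unfolding Y2 w_poly_mult_binary_form[where f=e, OF e_top]
    unfolding Y1 x_poly_mult_binary_form[where f=d, OF d_top]
    unfolding Y
    by (simp add: smult_binary_form binary_form_diff binary_form_add algebra_simps)
  also have "\<dots> = 0"
    by (rule binary_form_eq_0) (use jacobi_coeff_ode[where \<mu>=\<mu> and k=k] in \<open>simp add: n c_def d_def e_def\<close>)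
  finally show ?thesis by simp
qed

section \<open>Squares of Jacobi polynomials\<close>

definition symsq_inner :: "real \<Rightarrow> real \<Rightarrow> real poly \<Rightarrow> real poly" where
  "symsq_inner a E u = w_poly * pderiv (pderiv u) - smult a (x_poly * pderiv u) + smult (2 * E) u"

text \<open>The symmetric square of the equation \<open>(1 - x^2) y'' = a x y' - E y\<close>: a third order
  operator whose kernel contains the squares of its solutions.\<close>
definition symsq_op :: "real \<Rightarrow> real \<Rightarrow> real poly \<Rightarrow> real poly" where
  "symsq_op a E u = w_poly * pderiv (symsq_inner a E u) - smult (2 * a - 2) (x_poly * symsq_inner a E u)
     + smult (2 * E) (w_poly * pderiv u)"

lemma symsq_op_square:
  assumes ode: "w_poly * pderiv (pderiv y) = smult a (x_poly * pderiv y) - smult E y"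
  shows "symsq_op a E (y * y) = 0"
proof -
  have ode0: "w_poly * pderiv (pderiv y) - smult a (x_poly * pderiv y) + smult E y = 0"
    using ode by simp
  then have ode1: "pderiv (w_poly * pderiv (pderiv y) - smult a (x_poly * pderiv y) + smult E y) = 0"
    by simp
  show ?thesis
  proof (rule poly_eq_by_eval)
    fix t
    have h0: "(1 - t\<^sup>2) * poly (pderiv (pderiv y)) t - a * (t * poly (pderiv y) t) + E * poly y t = 0"
      using arg_cong[OF ode0, of "\<lambda>p. poly p t"] by simp
    have h1: "-2 * t * poly (pderiv (pderiv y)) t + (1 - t\<^sup>2) * poly (pderiv (pderiv (pderiv y))) t
        - a * (poly (pderiv y) t + t * poly (pderiv (pderiv y)) t) + E * poly (pderiv y) t = 0"
      using arg_cong[OF ode1, of "\<lambda>p. poly p t"]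
      by (simp add: pderiv_add pderiv_diff pderiv_mult pderiv_smult algebra_simps)
    show "poly (symsq_op a E (y * y)) t = poly 0 t"
      unfolding symsq_op_def symsq_inner_def
      by (simp add: pderiv_add pderiv_diff pderiv_mult pderiv_smult) (use h0 h1 in algebra)
  qed
qed

definition symsq_diag :: "real \<Rightarrow> real \<Rightarrow> real \<Rightarrow> real" where
  "symsq_diag a E x = - (2 * E - 2 * x - 4 * x * (x - 1) - 2 * a * x) * (2 * x + 2 * a - 2) - 4 * E * x"

definition symsq_sub :: "real \<Rightarrow> real \<Rightarrow> real" where
  "symsq_sub a x = - (4 * x * (x - 1) + 2 * a * x) * (2 * x + 2 * a - 4)"

lemma pderiv_w_power: "pderiv (w_poly ^ Suc k) = smult (-2 * real (Suc k)) (x_poly * w_poly ^ k)"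
  by (rule poly_eq_by_eval) (simp add: pderiv_power_Suc algebra_simps del: power_Suc)

lemma symsq_inner_w_power:
  "symsq_inner a E (w_poly ^ Suc (Suc i)) =
     smult (4 * (real i + 2) * (real i + 1) + 2 * a * (real i + 2)) (w_poly ^ Suc i)
   + smult (2 * E - 2 * (real i + 2) - 4 * (real i + 2) * (real i + 1) - 2 * a * (real i + 2))
       (w_poly ^ Suc (Suc i))"
  unfolding symsq_inner_def pderiv_w_power pderiv_smult pderiv_mult pderiv_x_poly pderiv_w_power
  by (rule poly_eq_by_eval) (simp add: algebra_simps power2_eq_square)

lemma symsq_op_w_power:
  "symsq_op a E (w_poly ^ k) = x_poly * (smult (symsq_diag a E (real k)) (w_poly ^ k)
                                         + smult (symsq_sub a (real k)) (w_poly ^ (k - 1)))"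
proof (cases k)
  case 0
  then show ?thesis
    unfolding symsq_op_def symsq_inner_def
    by (intro poly_eq_by_eval) (simp add: symsq_diag_def symsq_sub_def algebra_simps)
next
  case (Suc j)
  show ?thesis
  proof (cases j)
    case 0
    with Suc show ?thesis
      unfolding symsq_op_def symsq_inner_def
      by (intro poly_eq_by_eval)
        (simp add: pderiv_add pderiv_diff pderiv_minus pderiv_mult pderiv_smult symsq_diag_def
          symsq_sub_def algebra_simps power2_eq_square)
  next
    case (Suc i)
    with \<open>k = Suc j\<close> have "k = Suc (Suc i)" by simp
    show ?thesis
      unfolding \<open>k = Suc (Suc i)\<close>
      unfolding symsq_op_def symsq_inner_w_power pderiv_add pderiv_smult pderiv_mult pderiv_x_poly
        pderiv_w_power
      by (intro poly_eq_by_eval) (simp add: symsq_diag_def symsq_sub_def algebra_simps power2_eq_square)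
  qed
qed

lemma symsq_inner_add: "symsq_inner a E (p + q) = symsq_inner a E p + symsq_inner a E q"
  by (simp add: symsq_inner_def pderiv_add ring_distribs smult_add_right)

lemma symsq_inner_smult: "symsq_inner a E (smult c p) = smult c (symsq_inner a E p)"
  by (simp add: symsq_inner_def pderiv_smult smult_add_right smult_diff_right ac_simps)

lemma symsq_op_add: "symsq_op a E (p + q) = symsq_op a E p + symsq_op a E q"
  by (simp add: symsq_op_def symsq_inner_add pderiv_add ring_distribs smult_add_right)

lemma symsq_op_smult: "symsq_op a E (smult c p) = smult c (symsq_op a E p)"
  by (simp add: symsq_op_def symsq_inner_smult pderiv_smult smult_add_right smult_diff_right ac_simps)

lemma symsq_op_diff: "symsq_op a E (p - q) = symsq_op a E p - symsq_op a E q"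
  using symsq_op_add[of a E p "- q"] symsq_op_smult[of a E "-1" q] by simp

lemma symsq_op_sum: "symsq_op a E (sum f A) = (\<Sum>x\<in>A. symsq_op a E (f x))"
  by (induction A rule: infinite_finite_induct)
    (simp_all add: symsq_op_add symsq_op_smult[of a E 0 0, simplified])

definition w_series :: "nat \<Rightarrow> (nat \<Rightarrow> real) \<Rightarrow> real poly" where
  "w_series K c = (\<Sum>k\<le>K. smult (c k) (w_poly ^ k))"

lemma poly_w_series: "poly (w_series K c) t = (\<Sum>k\<le>K. c k * (1 - t\<^sup>2) ^ k)"
  by (simp add: w_series_def poly_sum)

lemma poly_w_series_at_1: "poly (w_series K c) 1 = c 0"
  by (simp add: poly_w_series zero_power sum.atMost_shift)

lemma w_series_cong: "(\<And>k. k \<le> K \<Longrightarrow> c k = d k) \<Longrightarrow> w_series K c = w_series K d"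
  by (simp add: w_series_def)

lemma w_series_add: "w_series K c + w_series K d = w_series K (\<lambda>k. c k + d k)"
  by (simp add: w_series_def sum.distrib smult_add_left)

lemma w_series_extend:
  "K \<le> K' \<Longrightarrow> w_series K c = w_series K' (\<lambda>k. if k \<le> K then c k else 0)"
  unfolding w_series_def by (rule sum.mono_neutral_cong_left) auto

lemma smult_w_power_eq_w_series:
  "m \<le> K \<Longrightarrow> smult a (w_poly ^ m) = w_series K (\<lambda>k. if k = m then a else 0)"
  by (simp add: w_series_def if_distrib[of "\<lambda>x. smult x _"] cong: if_cong)

lemma degree_w_power [simp]: "degree (w_poly ^ k) = 2 * k"
  by (simp add: degree_power_eq w_poly_def)

lemma lead_coeff_w_poly: "lead_coeff w_poly = -1"
  by (simp add: w_poly_def)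

lemma coeff_w_power_top: "coeff (w_poly ^ k) (2 * k) = (-1) ^ k"
  using lead_coeff_power[of w_poly k] by (simp add: lead_coeff_w_poly)

lemma degree_w_series: "degree (w_series K c) \<le> 2 * K"
  unfolding w_series_def
  by (rule degree_sum_le) (auto intro: order_trans[OF degree_smult_le])

lemma w_series_eq_0_imp:
  assumes "w_series K c = 0" "k \<le> K"
  shows "c k = 0"
  using assms
proof (induction K arbitrary: k)
  case 0
  then show ?case by (simp add: w_series_def)
next
  case (Suc K)
  have split: "w_series (Suc K) c = w_series K c + smult (c (Suc K)) (w_poly ^ Suc K)"
    by (simp add: w_series_def)
  have "coeff (w_series K c) (2 * Suc K) = 0"
    by (rule coeff_eq_0) (use degree_w_series[of K c] in simp)
  then have "coeff (w_series (Suc K) c) (2 * Suc K) = c (Suc K) * (-1) ^ Suc K"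
    unfolding split coeff_add coeff_smult coeff_w_power_top by simp
  with Suc.prems(1) have "c (Suc K) * (-1) ^ Suc K = 0" by simp
  then have top: "c (Suc K) = 0" by simp
  with Suc.prems(1) split have "w_series K c = 0" by simp
  with Suc.IH top Suc.prems(2) show ?case by (cases "k = Suc K") auto
qed

lemma even_poly_eq_w_series:
  fixes P :: "real poly"
  assumes "\<And>t. poly P (- t) = poly P t"
  shows "\<exists>K c. P = w_series K c"
  using assms
proof (induction "degree P" arbitrary: P rule: less_induct)
  case less
  show ?case
  proof (cases "degree P = 0")
    case True
    then obtain a where "P = [:a:]" by (metis degree_eq_zeroE)
    then have "P = w_series 0 (\<lambda>_. a)" by (simp add: w_series_def)
    then show ?thesis by blast
  next
    case False
    define d where "d = degree P"
    define L where "L = lead_coeff P"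
    have "L \<noteq> 0" using False by (auto simp: L_def)
    have "pcompose P [:0, -1:] = P"
      by (rule poly_eq_by_eval) (simp add: poly_pcompose less.prems)
    then have "L = (-1) ^ d * L"
      using coeff_pcompose_linear[of P "-1" d] by (simp add: L_def d_def)
    then have "even d" using \<open>L \<noteq> 0\<close> by (cases "even d") auto
    then obtain m where dm: "d = 2 * m" by blast
    define Q where "Q = P - smult (L * (-1) ^ m) (w_poly ^ m)"
    have "coeff Q d = 0"
      unfolding Q_def dm by (simp add: coeff_w_power_top L_def d_def[symmetric] dm flip: power_add mult_2)
    moreover have "degree Q \<le> d"
      unfolding Q_def d_def
      by (rule degree_diff_le) (auto simp: dm d_def[symmetric] intro: order_trans[OF degree_smult_le])
    ultimately have "degree Q < degree P"
      using False by (metis d_def le_neq_implies_less leading_coeff_0_iff degree_0)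
    moreover have "\<And>t. poly Q (- t) = poly Q t"
      using less.prems by (simp add: Q_def)
    ultimately obtain K c where QK: "Q = w_series K c" using less.hyps by blast
    define K' where "K' = max K m"
    have "P = Q + smult (L * (-1) ^ m) (w_poly ^ m)" by (simp add: Q_def)
    also have "\<dots> = w_series K' (\<lambda>k. if k \<le> K then c k else 0)
                    + w_series K' (\<lambda>k. if k = m then L * (-1) ^ m else 0)"
      unfolding QK by (subst w_series_extend[of K K']) (auto simp: K'_def intro: smult_w_power_eq_w_series)
    finally show ?thesis
      unfolding w_series_add by blast
  qed
qed

lemma symsq_op_w_series:
  assumes "c (Suc K) = 0"
  shows "symsq_op a E (w_series K c)
           = x_poly * w_series K (\<lambda>k. c k * symsq_diag a E k + c (Suc k) * symsq_sub a (Suc k))"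
proof -
  have "symsq_op a E (w_series K c)
      = x_poly * ((\<Sum>k\<le>K. smult (c k * symsq_diag a E k) (w_poly ^ k))
                  + (\<Sum>k\<le>K. smult (c k * symsq_sub a k) (w_poly ^ (k - 1))))"
    unfolding w_series_def symsq_op_sum symsq_op_smult symsq_op_w_power
    by (simp add: sum.distrib sum_distrib_left distrib_left smult_add_right mult_ac)
  also have "(\<Sum>k\<le>K. smult (c k * symsq_sub a k) (w_poly ^ (k - 1)))
      = (\<Sum>k<K. smult (c (Suc k) * symsq_sub a (Suc k)) (w_poly ^ k))"
    by (subst sum.atMost_shift) (simp add: symsq_sub_def)
  also have "\<dots> = (\<Sum>k\<le>K. smult (c (Suc k) * symsq_sub a (Suc k)) (w_poly ^ k))"
    using assms by (simp add: lessThan_Suc_atMost[symmetric])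
  finally show ?thesis
    unfolding w_series_def by (simp add: sum.distrib smult_add_left)
qed

lemma symsq_op_even_kernel_eq_0:
  fixes P :: "real poly"
  assumes even: "\<And>t. poly P (- t) = poly P t"
    and kernel: "symsq_op a E P = 0"
    and at_1: "poly P 1 = 0"
    and sub: "\<And>k. symsq_sub a (Suc k) \<noteq> 0"
  shows "P = 0"
proof -
  obtain K c0 where P0: "P = w_series K c0"
    using even_poly_eq_w_series[OF even] by blast
  define c where "c k = (if k \<le> K then c0 k else 0)" for k
  have P: "P = w_series K c"
    unfolding P0 by (rule w_series_cong) (simp add: c_def)
  have "x_poly * w_series K (\<lambda>k. c k * symsq_diag a E k + c (Suc k) * symsq_sub a (Suc k)) = 0"
    using kernel symsq_op_w_series[of c K a E] by (simp add: P c_def)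
  then have series: "w_series K (\<lambda>k. c k * symsq_diag a E k + c (Suc k) * symsq_sub a (Suc k)) = 0"
    by (simp add: x_poly_def)
  have rec: "c k * symsq_diag a E k + c (Suc k) * symsq_sub a (Suc k) = 0" for k
  proof (cases "k \<le> K")
    case True
    then show ?thesis using w_series_eq_0_imp[OF series True] by simp
  next
    case False
    then show ?thesis by (simp add: c_def)
  qed
  have "c k = 0" for k
  proof (induction k)
    case 0
    show ?case using at_1 by (simp add: P poly_w_series_at_1)
  next
    case (Suc k)
    then show ?case using rec[of k] sub[of k] by simp
  qed
  then show ?thesis by (simp add: P w_series_def)
qed

definition clausen_coeff :: "nat \<Rightarrow> nat \<Rightarrow> nat \<Rightarrow> real" where
  "clausen_coeff \<mu> n k = (real ((n + \<mu>) choose n))\<^sup>2 * pochhammer (- real n) k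
     * pochhammer (real n + 2 * real \<mu> + 1) k * pochhammer (real \<mu> + 1/2) k
     / (pochhammer (2 * real \<mu> + 1) k * pochhammer (real \<mu> + 1) k * fact k)"

lemma clausen_coeff_eq_0: "n < k \<Longrightarrow> clausen_coeff \<mu> n k = 0"
  by (simp add: clausen_coeff_def pochhammer_of_nat_eq_0_iff)

lemma clausen_coeff_Suc:
  "clausen_coeff \<mu> n (Suc k) = clausen_coeff \<mu> n k
     * ((real k - real n) * (real n + 2 * real \<mu> + 1 + real k) * (real \<mu> + 1/2 + real k))
     / ((2 * real \<mu> + 1 + real k) * (real \<mu> + 1 + real k) * (real k + 1))"
proof -
  have "pochhammer (2 * real \<mu> + 1) k > 0" "pochhammer (real \<mu> + 1) k > 0"
    by (simp_all add: pochhammer_pos)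
  then show ?thesis
    unfolding clausen_coeff_def pochhammer_Suc fact_Suc by (simp add: field_simps)
qed

lemma clausen_coeff_recurrence:
  fixes \<mu> n k :: nat
  defines "a \<equiv> 2 * real \<mu> + 2" and "E \<equiv> real n * (real n + 2 * real \<mu> + 1)"
  shows "clausen_coeff \<mu> n k * symsq_diag a E k + clausen_coeff \<mu> n (Suc k) * symsq_sub a (Suc k) = 0"
proof -
  define num where "num = (real k - real n) * (real n + 2 * real \<mu> + 1 + real k) * (real \<mu> + 1/2 + real k)"
  define den where "den = (2 * real \<mu> + 1 + real k) * (real \<mu> + 1 + real k) * (real k + 1)"
  have key: "num * symsq_sub a (Suc k) = - symsq_diag a E k * den"
    unfolding num_def den_def a_def E_def symsq_sub_def symsq_diag_def by (simp add: algebra_simps)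
  have "den \<noteq> 0" by (simp add: den_def)
  have "clausen_coeff \<mu> n (Suc k) * symsq_sub a (Suc k)
      = clausen_coeff \<mu> n k * (num * symsq_sub a (Suc k)) / den"
    unfolding clausen_coeff_Suc num_def den_def by simp
  also have "\<dots> = - clausen_coeff \<mu> n k * symsq_diag a E k"
    unfolding key using \<open>den \<noteq> 0\<close> by simp
  finally show ?thesis by simp
qed

lemma jacobiP_minus: "jacobiP n a a (- t) = (-1) ^ n * jacobiP n a a t"
proof -
  have "jacobiP n a a (- t) = (\<Sum>s=0..n. (-1) ^ n * (real ((n + a) choose (n - s)) * real ((n + a) choose s)
       * ((t + 1) / 2) ^ s * ((t - 1) / 2) ^ (n - s)))"
    unfolding jacobiP_def
  proof (rule sum.cong[OF refl])
    fix s assume "s \<in> {0..n}"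
    have e1: "(- t - 1) / 2 = - ((t + 1) / 2)" and e2: "(- t + 1) / 2 = - ((t - 1) / 2)"
      by (simp_all add: field_simps)
    have "((- t - 1) / 2) ^ s = (-1) ^ s * ((t + 1) / 2) ^ s"
      unfolding e1 by (rule power_minus)
    moreover have "((- t + 1) / 2) ^ (n - s) = (-1) ^ (n - s) * ((t - 1) / 2) ^ (n - s)"
      unfolding e2 by (rule power_minus)
    moreover have "(-1::real) ^ s * (-1) ^ (n - s) = (-1) ^ n"
      using \<open>s \<in> {0..n}\<close> by (simp add: power_add[symmetric])
    ultimately show "real ((n + a) choose (n - s)) * real ((n + a) choose s) * ((- t - 1) / 2) ^ s
          * ((- t + 1) / 2) ^ (n - s)
        = (-1) ^ n * (real ((n + a) choose (n - s)) * real ((n + a) choose s) * ((t + 1) / 2) ^ s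
          * ((t - 1) / 2) ^ (n - s))"
      by (simp add: algebra_simps)
  qed
  also have "\<dots> = (-1) ^ n * jacobiP n a a t"
    unfolding jacobiP_def sum_distrib_left[symmetric]
    by (subst sum.atLeastAtMost_rev) (auto intro!: sum.cong simp: mult_ac)
  finally show ?thesis .
qed

lemma jacobiP_at_1: "jacobiP n a b 1 = real ((n + a) choose n)"
  by (simp add: jacobiP_def zero_power atLeast0AtMost sum.atMost_shift)

lemma symsq_sub_neq_0: "1 < a \<Longrightarrow> 1 \<le> x \<Longrightarrow> symsq_sub a x \<noteq> 0"
proof -
  assume "1 < a" "1 \<le> x"
  moreover have "4 * x * (x - 1) \<ge> 0" "2 * a * x > 0"
    using \<open>1 \<le> x\<close> \<open>1 < a\<close> by simp_all
  ultimately have "4 * x * (x - 1) + 2 * a * x > 0" "2 * x + 2 * a - 4 > 0"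
    by linarith+
  then have "(4 * x * (x - 1) + 2 * a * x) * (2 * x + 2 * a - 4) > 0"
    by (intro mult_pos_pos)
  then show ?thesis
    unfolding symsq_sub_def by (simp only: minus_mult_left)
qed

theorem jacobi_poly_sq_eq_w_series:
  "jacobi_poly \<mu> n * jacobi_poly \<mu> n = w_series n (clausen_coeff \<mu> n)"
proof -
  define a where "a = 2 * real \<mu> + 2"
  define E where "E = real n * (real n + 2 * real \<mu> + 1)"
  define D where "D = jacobi_poly \<mu> n * jacobi_poly \<mu> n - w_series n (clausen_coeff \<mu> n)"
  have "D = 0"
  proof (rule symsq_op_even_kernel_eq_0)
    show "poly D (- t) = poly D t" for t
      by (simp add: D_def poly_jacobi_poly jacobiP_minus poly_w_series power_mult_distrib[symmetric])
    have "symsq_op a E (jacobi_poly \<mu> n * jacobi_poly \<mu> n) = 0"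
      unfolding a_def E_def by (rule symsq_op_square) (rule jacobi_poly_ode)
    moreover have "symsq_op a E (w_series n (clausen_coeff \<mu> n)) = x_poly * w_series n (\<lambda>_. 0)"
      unfolding symsq_op_w_series[where c = "clausen_coeff \<mu> n", OF clausen_coeff_eq_0[OF lessI]]
        a_def E_def clausen_coeff_recurrence ..
    ultimately show "symsq_op a E D = 0"
      by (simp add: D_def symsq_op_diff w_series_def)
    show "poly D 1 = 0"
      by (simp add: D_def poly_jacobi_poly jacobiP_at_1 poly_w_series_at_1 clausen_coeff_def power2_eq_square)
    show "symsq_sub a (Suc k) \<noteq> 0" for k
      by (rule symsq_sub_neq_0) (simp_all add: a_def)
  qed
  then show ?thesis by (simp add: D_def)
qed

section \<open>Integrals\<close>

lemma pderiv_surj: "\<exists>R. pderiv R = (Q :: real poly)"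
proof -
  define R where "R = (\<Sum>i\<le>degree Q. monom (coeff Q i / real (Suc i)) (Suc i))"
  have "pderiv R = (\<Sum>i\<le>degree Q. monom (coeff Q i) i)"
    unfolding R_def pderiv_sum pderiv_monom by (simp del: of_nat_Suc)
  then show ?thesis using poly_as_sum_of_monoms[of Q] by metis
qed

lemma has_integral_pderiv_poly:
  fixes R :: "real poly"
  assumes "a \<le> b"
  shows "(poly (pderiv R) has_integral (poly R b - poly R a)) {a..b}"
proof (rule fundamental_theorem_of_calculus[OF assms])
  fix x assume "x \<in> {a..b}"
  show "(poly R has_vector_derivative poly (pderiv R) x) (at x within {a..b})"
    using poly_DERIV[of R x]
    by (simp add: has_field_derivative_at_within has_real_derivative_iff_has_vector_derivative[symmetric])
qed

lemma integrable_poly: "a \<le> b \<Longrightarrow> poly (Q :: real poly) integrable_on {a..b}"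
  using pderiv_surj[of Q] has_integral_pderiv_poly by blast

definition w_moment :: "nat \<Rightarrow> real" where
  "w_moment p = 2 * fact p / pochhammer (3/2) p"

lemma has_integral_w_power: "(poly (w_poly ^ p) has_integral w_moment p) {-1..1}"
proof (induction p)
  case 0
  have "poly (1 :: real poly) = (\<lambda>_. 1)" by auto
  then show ?case
    using has_integral_pderiv_poly[of "-1" 1 x_poly] by (simp add: w_moment_def)
next
  case (Suc p)
  define c1 c2 where "c1 = 2 * real p + 3" and "c2 = 2 * real p + 2"
  obtain J where J: "(poly (w_poly ^ Suc p) has_integral J) {-1..1}"
    using integrable_poly[of "-1" 1 "w_poly ^ Suc p"] by (auto simp: integrable_on_def)
  have deriv: "pderiv (x_poly * w_poly ^ Suc p) = smult c1 (w_poly ^ Suc p) - smult c2 (w_poly ^ p)"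
    unfolding pderiv_mult pderiv_w_power pderiv_x_poly c1_def c2_def
    by (rule poly_eq_by_eval) (simp add: algebra_simps power2_eq_square)
  have "poly (smult c1 (w_poly ^ Suc p) - smult c2 (w_poly ^ p))
      = (\<lambda>t. c1 * poly (w_poly ^ Suc p) t - c2 * poly (w_poly ^ p) t)"
    by (rule ext) simp
  then have "(poly (pderiv (x_poly * w_poly ^ Suc p)) has_integral c1 * J - c2 * w_moment p) {-1..1}"
    unfolding deriv by (simp only:) (intro has_integral_diff has_integral_mult_right J Suc.IH)
  moreover have "(poly (pderiv (x_poly * w_poly ^ Suc p)) has_integral 0) {-1..1}"
    using has_integral_pderiv_poly[of "-1" 1 "x_poly * w_poly ^ Suc p"] by simp
  ultimately have "c1 * J - c2 * w_moment p = 0"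
    by (rule has_integral_unique)
  then have "J = c2 * w_moment p / c1"
    by (simp add: c1_def field_simps)
  also have "\<dots> = w_moment (Suc p)"
    using pochhammer_pos[of "3/2::real" p]
    unfolding w_moment_def pochhammer_Suc fact_Suc c1_def c2_def by (simp add: field_simps)
  finally show ?case using J by (simp only:)
qed

lemma has_integral_poly_cos2:
  fixes Q :: "real poly"
  assumes "(poly Q has_integral I) {-1..1}"
  shows "((\<lambda>x. poly Q (cos (2 * x)) * sin (2 * x)) has_integral I / 2) {0..pi/2}"
proof -
  obtain R where R: "pderiv R = Q" using pderiv_surj by blast
  have I: "I = poly R 1 - poly R (-1)"
    using has_integral_unique[OF assms has_integral_pderiv_poly[of "-1" 1 R, unfolded R]] by simp
  define F where "F x = - poly R (cos (2 * x)) / 2" for x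
  have "((\<lambda>x. poly Q (cos (2 * x)) * sin (2 * x)) has_integral (F (pi/2) - F 0)) {0..pi/2}"
  proof (rule fundamental_theorem_of_calculus)
    fix x assume "x \<in> {0..pi/2}"
    have "((\<lambda>x. cos (2 * x)) has_real_derivative - sin (2 * x) * 2) (at x)"
      by (auto intro!: derivative_eq_intros)
    from DERIV_chain2[OF poly_DERIV this]
    have "(F has_real_derivative - (poly (pderiv R) (cos (2 * x)) * (- sin (2 * x) * 2)) / 2) (at x)"
      unfolding F_def by (intro DERIV_cdivide DERIV_minus)
    then have "(F has_real_derivative poly Q (cos (2 * x)) * sin (2 * x)) (at x)"
      by (simp add: R)
    then show "(F has_vector_derivative poly Q (cos (2 * x)) * sin (2 * x)) (at x within {0..pi/2})"
      by (simp add: has_real_derivative_iff_has_vector_derivative has_vector_derivative_at_within)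
  qed simp
  moreover have "F (pi/2) - F 0 = I / 2"
    by (simp add: F_def I)
  ultimately show ?thesis by simp
qed

lemma eigf_sq:
  "eigf \<mu> n x * eigf \<mu> n x
     = (normN \<mu> n)\<^sup>2 * poly (w_poly ^ \<mu> * (jacobi_poly \<mu> n * jacobi_poly \<mu> n)) (cos (2 * x))"
proof -
  define c where "c = cos (2 * x)"
  have "-1 \<le> c" "c \<le> 1" by (simp_all add: c_def)
  then have "0 \<le> 1 - c" "0 \<le> 1 + c" by linarith+
  then have s1: "sqrt ((1 - c) ^ \<mu>) * sqrt ((1 - c) ^ \<mu>) = (1 - c) ^ \<mu>"
    and s2: "sqrt ((1 + c) ^ \<mu>) * sqrt ((1 + c) ^ \<mu>) = (1 + c) ^ \<mu>"
    by simp_all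
  have "eigf \<mu> n x * eigf \<mu> n x = (normN \<mu> n)\<^sup>2
      * ((sqrt ((1 - c) ^ \<mu>) * sqrt ((1 - c) ^ \<mu>)) * (sqrt ((1 + c) ^ \<mu>) * sqrt ((1 + c) ^ \<mu>)))
      * (jacobiP n \<mu> \<mu> c * jacobiP n \<mu> \<mu> c)"
    unfolding eigf_def c_def by (simp add: power2_eq_square mult_ac)
  also have "\<dots> = (normN \<mu> n)\<^sup>2 * ((1 - c) * (1 + c)) ^ \<mu> * (jacobiP n \<mu> \<mu> c * jacobiP n \<mu> \<mu> c)"
    unfolding s1 s2 by (simp add: power_mult_distrib)
  also have "\<dots> = (normN \<mu> n)\<^sup>2 * poly (w_poly ^ \<mu> * (jacobi_poly \<mu> n * jacobi_poly \<mu> n)) c"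
    by (simp add: poly_jacobi_poly algebra_simps power2_eq_square)
  finally show ?thesis unfolding c_def .
qed

lemma w_power_mult_w_series_mult_w_series:
  "w_poly ^ q * w_series K c * w_series L d
     = (\<Sum>a\<le>K. \<Sum>b\<le>L. smult (c a * d b) (w_poly ^ (q + a + b)))"
proof -
  have "w_poly ^ q * w_series K c * w_series L d
      = (\<Sum>a\<le>K. \<Sum>b\<le>L. w_poly ^ q * (smult (c a) (w_poly ^ a) * smult (d b) (w_poly ^ b)))"
    unfolding w_series_def mult.assoc sum_product by (simp add: sum_distrib_left smult_sum_right)
  also have "\<dots> = (\<Sum>a\<le>K. \<Sum>b\<le>L. smult (c a * d b) (w_poly ^ (q + a + b)))"
    by (intro sum.cong refl) (simp add: power_add mult_ac)
  finally show ?thesis .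
qed

lemma Ccoef_eq_double_sum:
  "Ccoef \<mu> \<gamma> \<gamma> m m = (normN \<mu> \<gamma>)\<^sup>2 * (normN \<mu> m)\<^sup>2 / 2 *
     (\<Sum>a\<le>\<gamma>. \<Sum>b\<le>m. clausen_coeff \<mu> \<gamma> a * clausen_coeff \<mu> m b * w_moment (2 * \<mu> + a + b))"
  (is "_ = _ * ?S")
proof -
  define Q where "Q = w_poly ^ (2 * \<mu>) * (jacobi_poly \<mu> \<gamma> * jacobi_poly \<mu> \<gamma>) * (jacobi_poly \<mu> m * jacobi_poly \<mu> m)"
  have Q_sum: "Q = (\<Sum>a\<le>\<gamma>. \<Sum>b\<le>m. smult (clausen_coeff \<mu> \<gamma> a * clausen_coeff \<mu> m b) (w_poly ^ (2 * \<mu> + a + b)))"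
    unfolding Q_def jacobi_poly_sq_eq_w_series by (rule w_power_mult_w_series_mult_w_series)
  have "poly Q = (\<lambda>t. \<Sum>a\<le>\<gamma>. \<Sum>b\<le>m. clausen_coeff \<mu> \<gamma> a * clausen_coeff \<mu> m b
                              * poly (w_poly ^ (2 * \<mu> + a + b)) t)"
    unfolding Q_sum by (intro ext) (simp only: poly_sum poly_smult)
  then have "(poly Q has_integral ?S) {-1..1}"
    by (simp only:) (intro has_integral_sum has_integral_mult_right has_integral_w_power finite_atMost)
  then have integral_Q: "((\<lambda>x. poly Q (cos (2 * x)) * sin (2 * x)) has_integral ?S / 2) {0..pi/2}"
    by (rule has_integral_poly_cos2)
  have integrand: "eigf \<mu> \<gamma> x * eigf \<mu> \<gamma> x * eigf \<mu> m x * eigf \<mu> m x * sin (2 * x)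
      = (normN \<mu> \<gamma>)\<^sup>2 * (normN \<mu> m)\<^sup>2 * (poly Q (cos (2 * x)) * sin (2 * x))" for x
  proof -
    have "w_poly ^ (2 * \<mu>) = w_poly ^ \<mu> * w_poly ^ \<mu>" by (simp add: mult_2 power_add)
    then have "eigf \<mu> \<gamma> x * eigf \<mu> \<gamma> x * eigf \<mu> m x * eigf \<mu> m x * sin (2 * x)
        = (eigf \<mu> \<gamma> x * eigf \<mu> \<gamma> x) * (eigf \<mu> m x * eigf \<mu> m x) * sin (2 * x)
      \<and> poly Q (cos (2 * x)) = poly (w_poly ^ \<mu> * (jacobi_poly \<mu> \<gamma> * jacobi_poly \<mu> \<gamma>)) (cos (2 * x))
          * poly (w_poly ^ \<mu> * (jacobi_poly \<mu> m * jacobi_poly \<mu> m)) (cos (2 * x))"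
      by (simp add: Q_def mult_ac)
    then show ?thesis unfolding eigf_sq by (simp add: mult_ac)
  qed
  have "((\<lambda>x. eigf \<mu> \<gamma> x * eigf \<mu> \<gamma> x * eigf \<mu> m x * eigf \<mu> m x * sin (2 * x))
      has_integral (normN \<mu> \<gamma>)\<^sup>2 * (normN \<mu> m)\<^sup>2 * (?S / 2)) {0..pi/2}"
    unfolding integrand by (rule has_integral_mult_right) (rule integral_Q)
  then show ?thesis
    unfolding Ccoef_def by (simp add: integral_unique)
qed

section \<open>Diagonalizing a bilinear form by a triangular basis\<close>

definition gram_form :: "nat \<Rightarrow> (nat \<Rightarrow> nat \<Rightarrow> real) \<Rightarrow> (nat \<Rightarrow> real) \<Rightarrow> (nat \<Rightarrow> real) \<Rightarrow> real" where
  "gram_form M G u v = (\<Sum>a\<le>M. \<Sum>b\<le>M. u a * G a b * v b)"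

lemma gram_form_commute: "(\<And>a b. G a b = G b a) \<Longrightarrow> gram_form M G u v = gram_form M G v u"
  unfolding gram_form_def by (subst sum.swap) (simp add: mult_ac)

lemma gram_form_add_left: "gram_form M G (\<lambda>a. u a + w a) v = gram_form M G u v + gram_form M G w v"
  by (simp add: gram_form_def distrib_right sum.distrib)

lemma gram_form_scale_left: "gram_form M G (\<lambda>a. c * u a) v = c * gram_form M G u v"
  by (simp add: gram_form_def sum_distrib_left mult_ac)

lemma gram_form_sum_left:
  "gram_form M G (\<lambda>a. \<Sum>l\<in>L. \<beta> l * r l a) v = (\<Sum>l\<in>L. \<beta> l * gram_form M G (r l) v)"
  by (induction L rule: infinite_finite_induct)
    (simp_all add: gram_form_add_left gram_form_scale_left, simp_all add: gram_form_def)

lemma triangular_span: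
  fixes r :: "nat \<Rightarrow> nat \<Rightarrow> real"
  assumes diag: "\<And>l. r l l \<noteq> 0" and upper: "\<And>l a. l < a \<Longrightarrow> r l a = 0"
  shows "\<forall>a>K. u a = 0 \<Longrightarrow> \<exists>\<beta>. \<forall>a. u a = (\<Sum>l\<le>K. \<beta> l * r l a)"
proof (induction K arbitrary: u)
  case 0
  show ?case
  proof (intro exI allI)
    fix a
    show "u a = (\<Sum>l\<le>0. (\<lambda>_. u 0 / r 0 0) l * r l a)"
    proof (cases "a = 0")
      case True
      then show ?thesis using diag[of 0] by simp
    next
      case False
      then show ?thesis using 0 upper[of 0 a] by simp
    qed
  qed
next
  case (Suc K)
  define c where "c = u (Suc K) / r (Suc K) (Suc K)"
  have "\<forall>a>K. u a - c * r (Suc K) a = 0"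
  proof (intro allI impI)
    fix a assume "K < a"
    show "u a - c * r (Suc K) a = 0"
    proof (cases "a = Suc K")
      case True
      then show ?thesis using diag[of "Suc K"] by (simp add: c_def)
    next
      case False
      with \<open>K < a\<close> have "Suc K < a" by simp
      then show ?thesis using Suc.prems upper by simp
    qed
  qed
  then have "\<exists>\<beta>. \<forall>a. u a - c * r (Suc K) a = (\<Sum>l\<le>K. \<beta> l * r l a)"
    by (rule Suc.IH)
  then obtain \<beta> where \<beta>: "\<forall>a. u a - c * r (Suc K) a = (\<Sum>l\<le>K. \<beta> l * r l a)"
    by blast
  show ?case
  proof (intro exI allI)
    fix a
    have "(\<Sum>l\<le>K. (\<beta>(Suc K := c)) l * r l a) = (\<Sum>l\<le>K. \<beta> l * r l a)"
      by (rule sum.cong) auto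
    then show "u a = (\<Sum>l\<le>Suc K. (\<beta>(Suc K := c)) l * r l a)"
      using \<beta>[rule_format, of a] by (simp only: sum.atMost_Suc fun_upd_same)
  qed
qed

lemma gram_form_triangular_expansion:
  fixes G :: "nat \<Rightarrow> nat \<Rightarrow> real" and r :: "nat \<Rightarrow> nat \<Rightarrow> real"
  assumes sym: "\<And>a b. G a b = G b a"
    and diag: "\<And>l. r l l \<noteq> 0" and upper: "\<And>l a. l < a \<Longrightarrow> r l a = 0"
    and orth: "\<And>a k. a < k \<Longrightarrow> k \<le> M \<Longrightarrow> (\<Sum>b\<le>M. G a b * r k b) = 0"
    and norm: "\<And>l. l \<le> M \<Longrightarrow> gram_form M G (r l) (r l) \<noteq> 0"
    and supp: "\<And>a. K < a \<Longrightarrow> u a = 0" and "K \<le> M"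
  shows "gram_form M G u v
           = (\<Sum>l\<le>K. gram_form M G u (r l) * gram_form M G (r l) v / gram_form M G (r l) (r l))"
proof -
  have "\<forall>a>K. u a = 0" using supp by blast
  then obtain \<beta> where "\<forall>a. u a = (\<Sum>l\<le>K. \<beta> l * r l a)"
    using triangular_span[of r, OF diag upper] by blast
  then have u: "u = (\<lambda>a. \<Sum>l\<le>K. \<beta> l * r l a)" by auto
  have orth_lt: "gram_form M G (r l) (r k) = 0" if "l < k" "k \<le> M" for l k
  proof -
    have "r l a * (\<Sum>b\<le>M. G a b * r k b) = 0" for a
    proof (cases "a \<le> l")
      case True
      then show ?thesis using orth[of a k] that by simp
    next
      case False
      then show ?thesis by (simp add: upper)
    qed
    then show ?thesis
      unfolding gram_form_def by (simp add: mult.assoc sum_distrib_left)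
  qed
  have orth_ne: "gram_form M G (r l) (r k) = 0" if "l \<noteq> k" "l \<le> M" "k \<le> M" for l k
  proof (cases "l < k")
    case True
    then show ?thesis using orth_lt that by simp
  next
    case False
    then have "k < l" using that by simp
    then show ?thesis using orth_lt[of k l] that gram_form_commute[OF sym] by simp
  qed
  have "gram_form M G u (r k) = \<beta> k * gram_form M G (r k) (r k)" if "k \<le> K" for k
  proof -
    have "gram_form M G u (r k) = (\<Sum>l\<le>K. \<beta> l * gram_form M G (r l) (r k))"
      unfolding u by (rule gram_form_sum_left)
    also have "\<dots> = (\<Sum>l\<le>K. if l = k then \<beta> k * gram_form M G (r k) (r k) else 0)"
      using that \<open>K \<le> M\<close> by (intro sum.cong refl) (auto simp: orth_ne)
    finally show ?thesis using that by simp
  qed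
  then have "(\<Sum>l\<le>K. gram_form M G u (r l) * gram_form M G (r l) v / gram_form M G (r l) (r l))
      = (\<Sum>l\<le>K. \<beta> l * gram_form M G (r l) v)"
    using norm \<open>K \<le> M\<close> by (intro sum.cong refl) auto
  also have "\<dots> = gram_form M G u v"
    unfolding u by (rule gram_form_sum_left[symmetric])
  finally show ?thesis ..
qed

section \<open>Closed forms\<close>

lemma w_moment_shift:
  "w_moment (p + j) = w_moment p * pochhammer (real p + 1) j / pochhammer (real p + 3/2) j"
proof -
  have "pochhammer (3/2::real) (p + j) = pochhammer (3/2) p * pochhammer (real p + 3/2) j"
    using pochhammer_product'[of "3/2::real" p j] by (simp add: add.commute)
  moreover have "pochhammer (3/2::real) p > 0" "pochhammer (real p + 3/2) j > 0"
    by (simp_all add: pochhammer_pos add_pos_nonneg)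
  ultimately show ?thesis
    unfolding w_moment_def pochhammer_of_nat_plus_1 by (simp add: field_simps)
qed

text \<open>The Gram matrix of the powers of \<open>1 - x^2\<close> for the weight \<open>(1 - x^2)^(2 mu)\<close> on \<open>[-1, 1]\<close>.\<close>
definition w_hankel :: "nat \<Rightarrow> nat \<Rightarrow> nat \<Rightarrow> real" where
  "w_hankel \<mu> a b = w_moment (2 * \<mu> + a + b)"

text \<open>The coefficients, in powers of \<open>1 - x^2\<close>, of the polynomial of degree \<open>k\<close> in \<open>1 - x^2\<close>
  that is orthogonal to all lower powers for this Gram matrix (\<open>orth_moment_eq_0\<close>).\<close>
definition orth_coeff :: "nat \<Rightarrow> nat \<Rightarrow> nat \<Rightarrow> real" where
  "orth_coeff \<mu> k j = pochhammer (- real k) j * pochhammer (real k + 2 * real \<mu> + 1/2) j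
     / (pochhammer (2 * real \<mu> + 1) j * fact j)"

definition orth_moment :: "nat \<Rightarrow> nat \<Rightarrow> nat \<Rightarrow> real" where
  "orth_moment \<mu> a k = (\<Sum>j\<le>k. w_hankel \<mu> a j * orth_coeff \<mu> k j)"

lemma orth_coeff_eq_0: "k < j \<Longrightarrow> orth_coeff \<mu> k j = 0"
  by (simp add: orth_coeff_def pochhammer_of_nat_eq_0_iff)

lemma orth_coeff_diag_neq_0: "orth_coeff \<mu> k k \<noteq> 0"
  by (simp add: orth_coeff_def pochhammer_same pochhammer_neq_0_if_not_nonpos_Ints
      pochhammer_pos[THEN less_imp_neq, THEN not_sym] add_pos_nonneg)

lemma orth_moment_eq:
  "orth_moment \<mu> a k = w_moment (2 * \<mu> + a) * pochhammer (1/2 - real k) k * pochhammer (- real a) k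
     / (pochhammer (2 * real \<mu> + 1) k * pochhammer (- real k - 2 * real \<mu> - real a - 1/2) k)"
proof -
  define A where "A = real k + 2 * real \<mu> + 1/2"
  define B where "B = real (2 * \<mu> + a) + 1"
  define C where "C = 2 * real \<mu> + 1"
  have "C \<notin> \<int>\<^sub>\<le>\<^sub>0"
    by (auto simp: C_def dest!: nonpos_Ints_nonpos)
  moreover have "A + B - C \<notin> \<int>"
    by (rule half_integer_not_Ints) (simp add: A_def B_def C_def)
  ultimately have saal: "(\<Sum>j\<le>k. saalschuetz_term A B C k j)
      = pochhammer (C - A) k * pochhammer (C - B) k / (pochhammer C k * pochhammer (C - A - B) k)"
    by (rule pfaff_saalschuetz)
  have "1 + A + B - C - real k = real (2 * \<mu> + a) + 3/2"
    by (simp add: A_def B_def C_def)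
  then have "w_hankel \<mu> a j * orth_coeff \<mu> k j = w_moment (2 * \<mu> + a) * saalschuetz_term A B C k j" for j
    unfolding w_hankel_def w_moment_shift orth_coeff_def saalschuetz_term_def
    by (simp add: A_def B_def C_def field_simps)
  then have "orth_moment \<mu> a k = w_moment (2 * \<mu> + a) * (\<Sum>j\<le>k. saalschuetz_term A B C k j)"
    by (simp add: orth_moment_def sum_distrib_left)
  moreover have e: "C - A = 1/2 - real k" "C - B = - real a"
    "1/2 - real k - B = - real k - 2 * real \<mu> - real a - 1/2"
    by (simp_all add: A_def B_def C_def)
  ultimately show ?thesis
    unfolding saal e by (simp add: C_def)
qed

lemma orth_moment_eq_0: "a < k \<Longrightarrow> orth_moment \<mu> a k = 0"
  unfolding orth_moment_eq by (simp add: pochhammer_of_nat_eq_0_iff)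

lemma sum_w_hankel_orth_coeff:
  "k \<le> M \<Longrightarrow> (\<Sum>b\<le>M. w_hankel \<mu> a b * orth_coeff \<mu> k b) = orth_moment \<mu> a k"
  unfolding orth_moment_def by (rule sum.mono_neutral_right) (auto simp: orth_coeff_eq_0)

lemma gram_form_orth_coeff_right:
  "l \<le> M \<Longrightarrow> gram_form M (w_hankel \<mu>) u (orth_coeff \<mu> l) = (\<Sum>a\<le>M. u a * orth_moment \<mu> a l)"
  unfolding gram_form_def by (simp add: mult.assoc sum_distrib_left[symmetric] sum_w_hankel_orth_coeff)

lemma gram_form_orth_coeff_self:
  assumes "l \<le> M"
  shows "gram_form M (w_hankel \<mu>) (orth_coeff \<mu> l) (orth_coeff \<mu> l) = orth_coeff \<mu> l l * orth_moment \<mu> l l"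
proof -
  have zero: "orth_coeff \<mu> l a * orth_moment \<mu> a l = 0" if "a \<noteq> l" for a
    using that by (cases "a < l") (simp_all add: orth_moment_eq_0 orth_coeff_eq_0)
  have "(\<Sum>a\<le>M. orth_coeff \<mu> l a * orth_moment \<mu> a l)
      = orth_coeff \<mu> l l * orth_moment \<mu> l l + (\<Sum>a\<in>{..M} - {l}. orth_coeff \<mu> l a * orth_moment \<mu> a l)"
    by (rule sum.remove) (use assms in auto)
  also have "(\<Sum>a\<in>{..M} - {l}. orth_coeff \<mu> l a * orth_moment \<mu> a l) = 0"
    by (rule sum.neutral) (simp add: zero)
  finally show ?thesis
    unfolding gram_form_orth_coeff_right[OF assms] by simp
qed

definition clausen_orth_sum :: "nat \<Rightarrow> nat \<Rightarrow> nat \<Rightarrow> real" where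
  "clausen_orth_sum \<mu> n l = (\<Sum>a\<le>n. clausen_coeff \<mu> n a * orth_moment \<mu> a l)"

lemma clausen_orth_sum_reindex:
  assumes "l \<le> n"
  shows "clausen_orth_sum \<mu> n l = (\<Sum>i\<le>n - l. clausen_coeff \<mu> n (l + i) * orth_moment \<mu> (l + i) l)"
proof -
  have "clausen_orth_sum \<mu> n l = (\<Sum>a=l..n. clausen_coeff \<mu> n a * orth_moment \<mu> a l)"
    unfolding clausen_orth_sum_def by (rule sum.mono_neutral_right) (auto simp: orth_moment_eq_0)
  also have "\<dots> = (\<Sum>i=0..n - l. clausen_coeff \<mu> n (i + l) * orth_moment \<mu> (i + l) l)"
    using sum.shift_bounds_cl_nat_ivl[of "\<lambda>a. clausen_coeff \<mu> n a * orth_moment \<mu> a l" 0 l "n - l"] assms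
    by simp
  finally show ?thesis by (simp add: atLeast0AtMost add.commute)
qed

definition saalschuetz_prefactor :: "nat \<Rightarrow> nat \<Rightarrow> nat \<Rightarrow> real" where
  "saalschuetz_prefactor \<mu> n l = (real ((n + \<mu>) choose n))\<^sup>2 * 2 * fact (2 * \<mu>) * pochhammer (1/2 - real l) l
     * pochhammer (- real n) l * pochhammer (real n + 2 * real \<mu> + 1) l * pochhammer (real \<mu> + 1/2) l
     / (pochhammer (2 * real \<mu> + 1) l * pochhammer (real \<mu> + 1) l * pochhammer (3/2) (2 * \<mu> + 2 * l))"

lemma fact_add_add_eq:
  "fact (k + l + i) = fact k * pochhammer (real k + 1) l * pochhammer (real k + 1 + real l) i"
  using pochhammer_of_nat_plus_1[of k "l + i"] pochhammer_product'[of "real k + 1" l i]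
  by (simp add: add.assoc field_simps)

lemma pochhammer_three_halves_add:
  "pochhammer (3/2) (k + l + i) * pochhammer (real k + real l + real i + 3/2) l
     = pochhammer (3/2) (k + 2 * l) * pochhammer (real k + 2 * real l + 3/2) i"
proof -
  have "pochhammer (3/2) (k + l + i) * pochhammer (3/2 + real (k + l + i)) l
      = pochhammer (3/2::real) (k + l + i + l)"
    by (rule pochhammer_product'[symmetric])
  also have "\<dots> = pochhammer (3/2::real) (k + 2 * l + i)"
    by (rule arg_cong[where f = "pochhammer (3/2)"]) simp
  also have "\<dots> = pochhammer (3/2) (k + 2 * l) * pochhammer (3/2 + real (k + 2 * l)) i"
    by (rule pochhammer_product')
  finally show ?thesis by (simp add: algebra_simps)
qed

lemma clausen_orth_term_eq:
  assumes "l \<le> n"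
  shows "clausen_coeff \<mu> n (l + i) * orth_moment \<mu> (l + i) l
     = saalschuetz_prefactor \<mu> n l * saalschuetz_term (real n + 2 * real \<mu> + 1 + real l)
         (real \<mu> + 1/2 + real l) (real \<mu> + 1 + real l) (n - l) i"
proof -
  have split: "pochhammer (- real n) (l + i) = pochhammer (- real n) l * pochhammer (- real n + real l) i"
    "pochhammer (real n + 2 * real \<mu> + 1) (l + i)
       = pochhammer (real n + 2 * real \<mu> + 1) l * pochhammer (real n + 2 * real \<mu> + 1 + real l) i"
    "pochhammer (real \<mu> + 1/2) (l + i) = pochhammer (real \<mu> + 1/2) l * pochhammer (real \<mu> + 1/2 + real l) i"
    "pochhammer (2 * real \<mu> + 1) (l + i) = pochhammer (2 * real \<mu> + 1) l * pochhammer (2 * real \<mu> + 1 + real l) i"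
    "pochhammer (real \<mu> + 1) (l + i) = pochhammer (real \<mu> + 1) l * pochhammer (real \<mu> + 1 + real l) i"
    by (rule pochhammer_product')+
  have fact_i: "fact (l + i) = fact i * pochhammer (real i + 1) l"
    using pochhammer_of_nat_plus_1[of i l] by (simp add: add.commute)
  have minus: "pochhammer (- real (l + i)) l = (-1) ^ l * pochhammer (real i + 1) l"
    "pochhammer (- real l - 2 * real \<mu> - real (l + i) - 1/2) l
       = (-1) ^ l * pochhammer (real (2 * \<mu>) + real l + real i + 3/2) l"
    using pochhammer_minus[of "real (l + i)" l]
      pochhammer_minus[of "real l + 2 * real \<mu> + real (l + i) + 1/2" l]
    by (simp_all add: algebra_simps)
  have moment: "w_moment (2 * \<mu> + (l + i)) = 2 * fact (2 * \<mu> + l + i) / pochhammer (3/2) (2 * \<mu> + l + i)"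
    by (simp add: w_moment_def add.assoc)
  have pos: "pochhammer (real i + 1) l > 0" "pochhammer (2 * real \<mu> + 1) l > 0"
    "pochhammer (2 * real \<mu> + 1 + real l) i > 0" "pochhammer (real \<mu> + 1) l > 0"
    "pochhammer (real \<mu> + 1 + real l) i > 0" "pochhammer (3/2::real) (2 * \<mu> + l + i) > 0"
    "pochhammer (3/2::real) (2 * \<mu> + 2 * l) > 0" "pochhammer (2 * real \<mu> + 2 * real l + 3/2) i > 0"
    "pochhammer (real (2 * \<mu>) + real l + real i + 3/2) l > 0"
    by (simp_all add: pochhammer_pos add_pos_nonneg)
  have three_halves: "1 / pochhammer (3/2) (2 * \<mu> + l + i) / pochhammer (real (2 * \<mu>) + real l + real i + 3/2) l
      = 1 / (pochhammer (3/2) (2 * \<mu> + 2 * l) * pochhammer (2 * real \<mu> + 2 * real l + 3/2) i)"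
    using pochhammer_three_halves_add[of "2 * \<mu>" l i] pos by (simp add: field_simps)
  have "- real (n - l) = - real n + real l"
    and "1 + (real n + 2 * real \<mu> + 1 + real l) + (real \<mu> + 1/2 + real l) - (real \<mu> + 1 + real l)
         - real (n - l) = 2 * real \<mu> + 2 * real l + 3/2"
    using assms by (simp_all add: of_nat_diff)
  then show ?thesis
    unfolding clausen_coeff_def orth_moment_eq saalschuetz_term_def saalschuetz_prefactor_def
    unfolding split fact_i minus moment fact_add_add_eq[of "2 * \<mu>" l i]
    using pos three_halves by (simp add: field_simps)
qed

lemma clausen_orth_sum_saalschuetz:
  assumes ln: "l \<le> n"
  shows "clausen_orth_sum \<mu> n l = saalschuetz_prefactor \<mu> n l * (pochhammer (- real n - real \<mu>) (n - l) * pochhammer (1/2) (n - l)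
     / (pochhammer (real \<mu> + 1 + real l) (n - l) * pochhammer (- real n - 2 * real \<mu> - real l - 1/2) (n - l)))"
proof -
  define A where "A = real n + 2 * real \<mu> + 1 + real l"
  define B where "B = real \<mu> + 1/2 + real l"
  define C where "C = real \<mu> + 1 + real l"
  have "C \<notin> \<int>\<^sub>\<le>\<^sub>0"
    by (auto simp: C_def dest!: nonpos_Ints_nonpos)
  moreover have "A + B - C \<notin> \<int>"
    by (rule half_integer_not_Ints) (simp add: A_def B_def C_def)
  ultimately have saal: "(\<Sum>j\<le>n - l. saalschuetz_term A B C (n - l) j)
      = pochhammer (C - A) (n - l) * pochhammer (C - B) (n - l)
        / (pochhammer C (n - l) * pochhammer (C - A - B) (n - l))"
    by (rule pfaff_saalschuetz)
  have e: "C - A = - real n - real \<mu>" "C - B = 1/2"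
    "- real n - real \<mu> - B = - real n - 2 * real \<mu> - real l - 1/2"
    by (simp_all add: A_def B_def C_def)
  note sum = saal[unfolded e]
  have "clausen_orth_sum \<mu> n l = saalschuetz_prefactor \<mu> n l * (\<Sum>j\<le>n - l. saalschuetz_term A B C (n - l) j)"
    unfolding clausen_orth_sum_reindex[OF ln] clausen_orth_term_eq[OF ln] A_def B_def C_def by (simp add: sum_distrib_left)
  then show ?thesis unfolding sum by (simp add: C_def)
qed

lemma clausen_orth_sum_eq:
  assumes ln: "l \<le> n"
  shows "clausen_orth_sum \<mu> n l = fact (n + \<mu>) ^ 2 * fact (2 * \<mu>) * 4 ^ \<mu> * half_pochhammer l * half_pochhammer (\<mu> + l) * fact (n + 2 * \<mu> + l) * half_pochhammer (n - l)
     / (fact n * fact (n - l) * fact (n + 2 * \<mu>) * fact (2 * \<mu> + l) * fact (\<mu> + l) * half_pochhammer (n + l + 2 * \<mu> + 1))"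
proof -
  define N where "N = n - l"
  have c0: "real ((n + \<mu>) choose n) = fact (n + \<mu>) / (fact n * fact \<mu>)"
    by (simp add: binomial_fact)
  have q1: "pochhammer (1/2 - real l) l = (-1) ^ l * half_pochhammer l" by (rule pochhammer_half_minus_of_nat)
  have q2: "pochhammer (- real n) l = (-1) ^ l * fact n / fact (n - l)" by (rule pochhammer_minus_of_nat[OF ln])
  have q3: "pochhammer (real n + 2 * real \<mu> + 1) l = fact (n + 2 * \<mu> + l) / fact (n + 2 * \<mu>)"
    using pochhammer_of_nat_plus_1[of "n + 2 * \<mu>" l] by simp
  have q4: "pochhammer (real \<mu> + 1/2) l = half_pochhammer (\<mu> + l) / half_pochhammer \<mu>" by (rule pochhammer_of_nat_plus_half)
  have q5: "pochhammer (2 * real \<mu> + 1) l = fact (2 * \<mu> + l) / fact (2 * \<mu>)"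
    using pochhammer_of_nat_plus_1[of "2 * \<mu>" l] by simp
  have q6: "pochhammer (real \<mu> + 1) l = fact (\<mu> + l) / fact \<mu>"
    using pochhammer_of_nat_plus_1[of \<mu> l] by simp
  have q7: "pochhammer (3/2) (2 * \<mu> + 2 * l) = 2 * half_pochhammer (2 * \<mu> + 2 * l + 1)"
    using pochhammer_three_halves[of "2 * \<mu> + 2 * l"] by simp
  have q8: "pochhammer (- real n - real \<mu>) N = (-1) ^ N * pochhammer (real \<mu> + 1 + real l) N"
  proof -
    have a: "pochhammer (- real n - real \<mu>) N = pochhammer (- (real n + real \<mu>)) N"
      by (rule arg_cong[where f="\<lambda>x. pochhammer x N"]) simp
    have b: "pochhammer (- (real n + real \<mu>)) N = (-1) ^ N * pochhammer (real n + real \<mu> - real N + 1) N"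
      by (rule pochhammer_minus)
    have c: "real n + real \<mu> - real N + 1 = real \<mu> + 1 + real l" using ln by (simp add: N_def of_nat_diff)
    show ?thesis by (simp only: a b c)
  qed
  have q9: "pochhammer (- real n - 2 * real \<mu> - real l - 1/2) N = (-1) ^ N * (half_pochhammer (n + l + 2 * \<mu> + 1) / half_pochhammer (2 * l + 2 * \<mu> + 1))"
  proof -
    have a: "pochhammer (- real n - 2 * real \<mu> - real l - 1/2) N = pochhammer (- (real n + 2 * real \<mu> + real l + 1/2)) N"
      by (rule arg_cong[where f="\<lambda>x. pochhammer x N"]) simp
    have b: "pochhammer (- (real n + 2 * real \<mu> + real l + 1/2)) N = (-1) ^ N * pochhammer (real n + 2 * real \<mu> + real l + 1/2 - real N + 1) N"
      by (rule pochhammer_minus)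
    have c: "real n + 2 * real \<mu> + real l + 1/2 - real N + 1 = real (2 * l + 2 * \<mu> + 1) + 1/2"
      using ln by (simp add: N_def of_nat_diff)
    have d: "pochhammer (real (2 * l + 2 * \<mu> + 1) + 1/2) N = half_pochhammer (2 * l + 2 * \<mu> + 1 + N) / half_pochhammer (2 * l + 2 * \<mu> + 1)"
      by (rule pochhammer_of_nat_plus_half)
    have e: "2 * l + 2 * \<mu> + 1 + N = n + l + 2 * \<mu> + 1" using ln by (simp add: N_def)
    show ?thesis by (simp only: a b c d e)
  qed
  have q10: "pochhammer (1/2) N = half_pochhammer N" by (simp add: half_pochhammer_def)
  have Hmu: "half_pochhammer \<mu> = fact (2 * \<mu>) / (4 ^ \<mu> * fact \<mu>)" by (rule half_pochhammer_eq_fact)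
  have pos: "half_pochhammer l > 0" "half_pochhammer (\<mu> + l) > 0" "half_pochhammer N > 0" "half_pochhammer (n + l + 2 * \<mu> + 1) > 0" "half_pochhammer (2 * l + 2 * \<mu> + 1) > 0"
     "half_pochhammer (2 * \<mu> + 2 * l + 1) > 0" "pochhammer (real \<mu> + 1 + real l) N > 0"
    by (simp_all add: half_pochhammer_pos pochhammer_pos add_pos_nonneg)
  have H_comm: "half_pochhammer (2 * l + 2 * \<mu> + 1) = half_pochhammer (2 * \<mu> + 2 * l + 1)"
    by (simp add: add_ac)
  show ?thesis
    unfolding clausen_orth_sum_saalschuetz[OF ln] N_def[symmetric] saalschuetz_prefactor_def c0 q1 q2 q3 q4 q5 q6 q7 q8 q9 q10 Hmu H_comm
    using pos by (simp add: field_simps power2_eq_square)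
qed

definition mcoef_weight :: "nat \<Rightarrow> nat \<Rightarrow> real" where
  "mcoef_weight \<mu> l = 2 * fact (2 * \<mu>) / ((4 * real l + 4 * real \<mu> + 1) * half_pochhammer (2 * \<mu>))"

lemma normN_sq_eq: "(normN \<mu> n)\<^sup>2 = (2 * real n + 1 + 2 * real \<mu>) / 4 ^ \<mu> * (fact n * fact (n + 2 * \<mu>)) / (fact (n + \<mu>))\<^sup>2"
proof -
  have g1: "Gamma (real n + 1) = fact n" by (rule Gamma_eq_fact) simp
  have g2: "Gamma (real n + 2 * real \<mu> + 1) = fact (n + 2 * \<mu>)" by (rule Gamma_eq_fact) simp
  have g3: "Gamma (real n + real \<mu> + 1) = fact (n + \<mu>)" by (rule Gamma_eq_fact) simp
  have p: "(2::real) ^ (2 * \<mu>) = 4 ^ \<mu>" by (simp add: power_mult)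
  have nn: "0 \<le> (2 * real n + 1 + 2 * real \<mu>) / 4 ^ \<mu> * (fact n * fact (n + 2 * \<mu>)) / (fact (n + \<mu>))\<^sup>2"
    by simp
  show ?thesis unfolding normN_def omega_def g1 g2 g3 p using nn by simp
qed

lemma Mcoef_eq:
  assumes ln: "l \<le> n"
  shows "Mcoef \<mu> n l = (4 * real l + 4 * real \<mu> + 1) * half_pochhammer l * half_pochhammer (2 * \<mu>) * half_pochhammer (l + \<mu>) / (2 * fact (l + \<mu>) * fact (l + 2 * \<mu>))
     * ((2 * real \<mu> + 2 * real n + 1) * half_pochhammer (n - l) * fact (n + l + 2 * \<mu>) / (fact (n - l) * half_pochhammer (n + l + 2 * \<mu> + 1)))"
proof -
  have g1: "Gamma (real l + 1/2) = sqrt pi * half_pochhammer l" by (rule Gamma_eq_half_pochhammer) simp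
  have g2: "Gamma (2 * real \<mu> + 1/2) = sqrt pi * half_pochhammer (2 * \<mu>)" by (rule Gamma_eq_half_pochhammer) simp
  have g3: "Gamma (real l + real \<mu> + 1/2) = sqrt pi * half_pochhammer (l + \<mu>)" by (rule Gamma_eq_half_pochhammer) simp
  have g4: "Gamma (real l + real \<mu> + 1) = fact (l + \<mu>)" by (rule Gamma_eq_fact) simp
  have g5: "Gamma (real l + 2 * real \<mu> + 1) = fact (l + 2 * \<mu>)" by (rule Gamma_eq_fact) simp
  have g6: "Gamma (real n - real l + 1/2) = sqrt pi * half_pochhammer (n - l)" by (rule Gamma_eq_half_pochhammer) (use ln in \<open>simp add: of_nat_diff\<close>)
  have g7: "Gamma (real n + real l + 2 * real \<mu> + 1) = fact (n + l + 2 * \<mu>)" by (rule Gamma_eq_fact) simp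
  have g8: "Gamma (real n - real l + 1) = fact (n - l)" by (rule Gamma_eq_fact) (use ln in \<open>simp add: of_nat_diff\<close>)
  have g9: "Gamma (real n + real l + 2 * real \<mu> + 3/2) = sqrt pi * half_pochhammer (n + l + 2 * \<mu> + 1)" by (rule Gamma_eq_half_pochhammer) simp
  have pp: "pi powr (3/2) = pi * sqrt pi"
  proof -
    have a: "pi powr (1 + 1/2) = pi powr 1 * pi powr (1/2)" by (rule powr_add)
    have b: "(1::real) + 1/2 = 3/2" by simp
    from a show ?thesis unfolding b by (simp add: powr_half_sqrt)
  qed
  define sp where "sp = sqrt pi"
  have pp': "pi powr (3/2) = sp * sp * sp" unfolding pp sp_def by simp
  have pos: "half_pochhammer l > 0" "half_pochhammer (2 * \<mu>) > 0" "half_pochhammer (l + \<mu>) > 0" "half_pochhammer (n - l) > 0" "half_pochhammer (n + l + 2 * \<mu> + 1) > 0" "sp > 0"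
    by (simp_all add: half_pochhammer_pos sp_def)
  show ?thesis unfolding Mcoef_def g1 g2 g3 g4 g5 g6 g7 g8 g9 pp' sp_def[symmetric]
    using pos by (simp add: field_simps)
qed

lemma normN_sq_mult_clausen_orth_sum:
  assumes ln: "l \<le> n"
  shows "(normN \<mu> n)\<^sup>2 * clausen_orth_sum \<mu> n l = Mcoef \<mu> n l * mcoef_weight \<mu> l"
proof -
  have pos: "half_pochhammer l > 0" "half_pochhammer (2 * \<mu>) > 0" "half_pochhammer (l + \<mu>) > 0" "half_pochhammer (n - l) > 0" "half_pochhammer (n + l + 2 * \<mu> + 1) > 0"
    by (simp_all add: half_pochhammer_pos)
  have e1: "half_pochhammer (\<mu> + l) = half_pochhammer (l + \<mu>)" by (simp add: add.commute)
  have e2: "fact (n + 2 * \<mu> + l) = fact (n + l + 2 * \<mu>)" by (simp add: add_ac)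
  have e3: "fact (2 * \<mu> + l) = fact (l + 2 * \<mu>)" by (simp add: add.commute)
  have e4: "fact (\<mu> + l) = fact (l + \<mu>)" by (simp add: add.commute)
  have c: "4 * real l + 4 * real \<mu> + 1 > 0" by (simp add: add_pos_nonneg)
  show ?thesis
    unfolding normN_sq_eq clausen_orth_sum_eq[OF ln] Mcoef_eq[OF ln] mcoef_weight_def e1 e2 e3 e4
    using pos c by (simp add: divide_simps power2_eq_square)
qed

lemma orth_norm_eq: "orth_coeff \<mu> l l * orth_moment \<mu> l l = 2 ^ (4 * \<mu> + 1) * fact (2 * l) * (fact (2 * \<mu>))\<^sup>2 / ((4 * real l + 4 * real \<mu> + 1) * fact (2 * l + 4 * \<mu>))"
proof -
  have r1: "pochhammer (- real l) l = (-1) ^ l * fact l" by (rule pochhammer_same)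
  have r2: "pochhammer (real l + 2 * real \<mu> + 1/2) l = half_pochhammer (2 * l + 2 * \<mu>) / half_pochhammer (l + 2 * \<mu>)"
  proof -
    have a: "real l + 2 * real \<mu> + 1/2 = real (l + 2 * \<mu>) + 1/2" by simp
    have b: "l + 2 * \<mu> + l = 2 * l + 2 * \<mu>" by simp
    show ?thesis by (simp only: a pochhammer_of_nat_plus_half b)
  qed
  have r3: "pochhammer (2 * real \<mu> + 1) l = fact (2 * \<mu> + l) / fact (2 * \<mu>)"
    using pochhammer_of_nat_plus_1[of "2 * \<mu>" l] by simp
  have r4: "pochhammer (1/2 - real l) l = (-1) ^ l * half_pochhammer l" by (rule pochhammer_half_minus_of_nat)
  have r5: "pochhammer (- real l - 2 * real \<mu> - real l - 1/2) l = (-1) ^ l * (half_pochhammer (2 * l + 2 * \<mu> + 1) / half_pochhammer (l + 2 * \<mu> + 1))"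
  proof -
    have a: "pochhammer (- real l - 2 * real \<mu> - real l - 1/2) l = pochhammer (- (2 * real l + 2 * real \<mu> + 1/2)) l"
      by (rule arg_cong[where f="\<lambda>x. pochhammer x l"]) simp
    have b: "pochhammer (- (2 * real l + 2 * real \<mu> + 1/2)) l = (-1) ^ l * pochhammer (2 * real l + 2 * real \<mu> + 1/2 - real l + 1) l"
      by (rule pochhammer_minus)
    have c: "2 * real l + 2 * real \<mu> + 1/2 - real l + 1 = real (l + 2 * \<mu> + 1) + 1/2" by simp
    have d: "pochhammer (real (l + 2 * \<mu> + 1) + 1/2) l = half_pochhammer (l + 2 * \<mu> + 1 + l) / half_pochhammer (l + 2 * \<mu> + 1)" by (rule pochhammer_of_nat_plus_half)
    have e: "l + 2 * \<mu> + 1 + l = 2 * l + 2 * \<mu> + 1" by simp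
    show ?thesis by (simp only: a b c d e)
  qed
  have r6: "w_moment (2 * \<mu> + l) = fact (2 * \<mu> + l) / half_pochhammer (l + 2 * \<mu> + 1)"
  proof -
    have "pochhammer (3/2::real) (2 * \<mu> + l) = 2 * half_pochhammer (Suc (2 * \<mu> + l))" by (rule pochhammer_three_halves)
    moreover have "Suc (2 * \<mu> + l) = l + 2 * \<mu> + 1" by simp
    ultimately show ?thesis unfolding w_moment_def by simp
  qed
  have r7: "half_pochhammer (2 * l + 2 * \<mu> + 1) = half_pochhammer (2 * l + 2 * \<mu>) * (real (2 * l + 2 * \<mu>) + 1/2)"
    unfolding half_pochhammer_def by (simp add: pochhammer_Suc)
  have r8: "half_pochhammer l = fact (2 * l) / (4 ^ l * fact l)" by (rule half_pochhammer_eq_fact)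
  have r9: "half_pochhammer (l + 2 * \<mu>) = fact (2 * l + 4 * \<mu>) / (4 ^ (l + 2 * \<mu>) * fact (l + 2 * \<mu>))"
  proof -
    have a: "2 * (l + 2 * \<mu>) = 2 * l + 4 * \<mu>" by simp
    show ?thesis using half_pochhammer_eq_fact[of "l + 2 * \<mu>"] by (simp only: a)
  qed
  have e3: "fact (2 * \<mu> + l) = fact (l + 2 * \<mu>)" by (simp add: add.commute)
  have pos: "half_pochhammer (2 * l + 2 * \<mu>) > 0" "half_pochhammer (l + 2 * \<mu> + 1) > 0" by (simp_all add: half_pochhammer_pos)
  have pw: "(2::real) ^ (4 * \<mu> + 1) = 2 * 4 ^ (2 * \<mu>)" by (simp add: power_add power_mult)
  have c: "4 * real l + 4 * real \<mu> + 1 > 0" by (simp add: add_pos_nonneg)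
  show ?thesis
    unfolding orth_coeff_def orth_moment_eq r1 r2 r3 r4 r5 r6 r7 r8 r9 e3 pw
    using pos c by (simp add: divide_simps power_add power2_eq_square)
qed

lemma mcoef_weight_sq_div_orth_norm: "(mcoef_weight \<mu> l)\<^sup>2 / (orth_coeff \<mu> l l * orth_moment \<mu> l l) = xi \<mu> l"
proof -
  have g1: "Gamma (2 * real l + 4 * real \<mu> + 1) = fact (2 * l + 4 * \<mu>)" by (rule Gamma_eq_fact) simp
  have g2: "Gamma (2 * real l + 1) = fact (2 * l)" by (rule Gamma_eq_fact) simp
  have g3: "Gamma (2 * real \<mu> + 1/2) = sqrt pi * half_pochhammer (2 * \<mu>)" by (rule Gamma_eq_half_pochhammer) simp
  have pw: "(2::real) powr (1 - 4 * real \<mu>) = 2 / 4 ^ (2 * \<mu>)"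
  proof -
    have a: "(2::real) powr (1 - 4 * real \<mu>) = 2 powr 1 / 2 powr (4 * real \<mu>)" by (rule powr_diff)
    have b: "(2::real) powr (4 * real \<mu>) = 2 ^ (4 * \<mu>)"
      using powr_realpow[of 2 "4 * \<mu>"] by simp
    have c: "(2::real) ^ (4 * \<mu>) = 4 ^ (2 * \<mu>)"
    proof -
      have "(2::real) ^ (4 * \<mu>) = (2 ^ 2) ^ (2 * \<mu>)" by (simp only: power_mult[symmetric]) simp
      then show ?thesis by simp
    qed
    show ?thesis unfolding a b c by simp
  qed
  have pw2: "(2::real) ^ (4 * \<mu> + 1) = 2 * 4 ^ (2 * \<mu>)" by (simp add: power_add power_mult)
  have pos: "half_pochhammer (2 * \<mu>) > 0" by (simp add: half_pochhammer_pos)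
  have c: "4 * real l + 4 * real \<mu> + 1 > 0" by (simp add: add_pos_nonneg)
  have sp: "sqrt pi * sqrt pi = pi" by simp
  have pi0: "pi > 0" by simp
  show ?thesis
    unfolding mcoef_weight_def orth_norm_eq xi_def g1 g2 g3 pw pw2 power_mult_distrib
    using pos c pi0 by (simp add: divide_simps power2_eq_square)
qed

lemma gram_form_clausen_orth_coeff:
  assumes "l \<le> n" "n \<le> M"
  shows "gram_form M (w_hankel \<mu>) (clausen_coeff \<mu> n) (orth_coeff \<mu> l) = clausen_orth_sum \<mu> n l"
  unfolding gram_form_orth_coeff_right[OF order_trans[OF assms]] clausen_orth_sum_def
  by (rule sum.mono_neutral_right) (use assms(2) in \<open>auto simp: clausen_coeff_eq_0\<close>)

lemma orth_norm_neq_0: "orth_coeff \<mu> l l * orth_moment \<mu> l l \<noteq> 0"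
  unfolding orth_norm_eq by (simp add: add_pos_nonneg)

lemma clausen_moment_double_sum_eq:
  assumes "\<gamma> \<le> m"
  shows "(\<Sum>a\<le>\<gamma>. \<Sum>b\<le>m. clausen_coeff \<mu> \<gamma> a * clausen_coeff \<mu> m b * w_moment (2 * \<mu> + a + b))
       = (\<Sum>l\<le>\<gamma>. clausen_orth_sum \<mu> \<gamma> l * clausen_orth_sum \<mu> m l
                     / (orth_coeff \<mu> l l * orth_moment \<mu> l l))"
proof -
  let ?G = "w_hankel \<mu>" and ?r = "orth_coeff \<mu>"
  have "(\<Sum>a\<le>\<gamma>. \<Sum>b\<le>m. clausen_coeff \<mu> \<gamma> a * clausen_coeff \<mu> m b * w_moment (2 * \<mu> + a + b))
      = (\<Sum>a\<le>m. \<Sum>b\<le>m. clausen_coeff \<mu> \<gamma> a * clausen_coeff \<mu> m b * w_moment (2 * \<mu> + a + b))"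
    by (rule sum.mono_neutral_left) (use assms in \<open>auto simp: clausen_coeff_eq_0\<close>)
  also have "\<dots> = gram_form m ?G (clausen_coeff \<mu> \<gamma>) (clausen_coeff \<mu> m)"
    unfolding gram_form_def w_hankel_def by (simp add: mult_ac)
  also have "\<dots> = (\<Sum>l\<le>\<gamma>. gram_form m ?G (clausen_coeff \<mu> \<gamma>) (?r l) * gram_form m ?G (?r l) (clausen_coeff \<mu> m)
                        / gram_form m ?G (?r l) (?r l))"
  proof (rule gram_form_triangular_expansion)
    show "?G a b = ?G b a" for a b by (simp add: w_hankel_def add_ac)
    show "?r l l \<noteq> 0" for l by (rule orth_coeff_diag_neq_0)
    show "?r l a = 0" if "l < a" for l a using that by (rule orth_coeff_eq_0)
    show "(\<Sum>b\<le>m. ?G a b * ?r k b) = 0" if "a < k" "k \<le> m" for a k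
      using that by (simp add: sum_w_hankel_orth_coeff orth_moment_eq_0)
    show "gram_form m ?G (?r l) (?r l) \<noteq> 0" if "l \<le> m" for l
      unfolding gram_form_orth_coeff_self[OF that] by (rule orth_norm_neq_0)
    show "clausen_coeff \<mu> \<gamma> a = 0" if "\<gamma> < a" for a using that by (rule clausen_coeff_eq_0)
  qed (rule assms)
  also have "\<dots> = (\<Sum>l\<le>\<gamma>. clausen_orth_sum \<mu> \<gamma> l * clausen_orth_sum \<mu> m l / (?r l l * orth_moment \<mu> l l))"
    using assms
    by (intro sum.cong refl) (simp add: gram_form_commute[of ?G _ "?r _"] w_hankel_def add_ac
        gram_form_clausen_orth_coeff gram_form_orth_coeff_self)
  finally show ?thesis .
qed

lemma normN_sq_clausen_orth_sum_product:
  assumes "l \<le> \<gamma>" "l \<le> m"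
  shows "(normN \<mu> \<gamma>)\<^sup>2 * (normN \<mu> m)\<^sup>2
           * (clausen_orth_sum \<mu> \<gamma> l * clausen_orth_sum \<mu> m l / (orth_coeff \<mu> l l * orth_moment \<mu> l l))
         = Mcoef \<mu> \<gamma> l * Mcoef \<mu> m l * xi \<mu> l"
proof -
  have "(normN \<mu> \<gamma>)\<^sup>2 * (normN \<mu> m)\<^sup>2
          * (clausen_orth_sum \<mu> \<gamma> l * clausen_orth_sum \<mu> m l / (orth_coeff \<mu> l l * orth_moment \<mu> l l))
      = ((normN \<mu> \<gamma>)\<^sup>2 * clausen_orth_sum \<mu> \<gamma> l) * ((normN \<mu> m)\<^sup>2 * clausen_orth_sum \<mu> m l)
          / (orth_coeff \<mu> l l * orth_moment \<mu> l l)"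
    by (simp add: mult_ac)
  also have "\<dots> = Mcoef \<mu> \<gamma> l * Mcoef \<mu> m l * ((mcoef_weight \<mu> l)\<^sup>2 / (orth_coeff \<mu> l l * orth_moment \<mu> l l))"
    unfolding normN_sq_mult_clausen_orth_sum[OF assms(1)] normN_sq_mult_clausen_orth_sum[OF assms(2)]
    by (simp add: power2_eq_square)
  finally show ?thesis
    unfolding mcoef_weight_sq_div_orth_norm .
qed

theorem lemma5p4:
  fixes \<mu> \<gamma> m :: nat
  assumes "\<gamma> \<le> m"
  shows "Ccoef \<mu> \<gamma> \<gamma> m m = 1/2 * (\<Sum>l=0..\<gamma>. Mcoef \<mu> \<gamma> l * Mcoef \<mu> m l * xi \<mu> l)"
proof -
  have "Ccoef \<mu> \<gamma> \<gamma> m m = 1/2 * (\<Sum>l\<le>\<gamma>. (normN \<mu> \<gamma>)\<^sup>2 * (normN \<mu> m)\<^sup>2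
          * (clausen_orth_sum \<mu> \<gamma> l * clausen_orth_sum \<mu> m l / (orth_coeff \<mu> l l * orth_moment \<mu> l l)))"
    unfolding Ccoef_eq_double_sum clausen_moment_double_sum_eq[OF assms] by (simp add: sum_distrib_left)
  also have "\<dots> = 1/2 * (\<Sum>l\<le>\<gamma>. Mcoef \<mu> \<gamma> l * Mcoef \<mu> m l * xi \<mu> l)"
    using assms by (intro arg_cong[where f = "\<lambda>x. 1/2 * x"] sum.cong refl normN_sq_clausen_orth_sum_product) auto
  finally show ?thesis
    by (simp add: atLeast0AtMost)
qed

end
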